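(* Let $\alpha>0$ and let $\mu$ be a positive Borel measure on $\mathbb{C}$ satisfying condition (M). Then the Toeplitz operator $T_\mu$ is compact on $F^\infty_\alpha$ if and only if $\tilde{\mu}_1\in C_0(\mathbb{C})$.
   Context: $F^\infty_\alpha$ is the space of entire functions $f$ with $\|f\|_{\infty,\alpha}=\sup_{z}|f(z)|e^{-\alpha|z|^2/2}<\infty$. $K_z(w)=e^{\alpha\bar z w}$. $\mu$ satisfies condition (M) if $\int_{\mathbb{C}}|K_z(w)|^2e^{-\alpha|w|^2}\,d\mu(w)<\infty$ for all $z$. $T_\mu f(z)=\int_{\mathbb{C}}f(w)\overline{K_z(w)}e^{-\alpha|w|^2}\,d\mu(w)$. $\tilde{\mu}_1(z)=\frac{\alpha}{\pi}\int_{\mathbb{C}}e^{-\alpha|z-w|^2/2}\,d\mu(w)$. $C_0(\mathbb{C})$ is the space of continuous functions on $\mathbb{C}$ tending to $0$ at infinity. *)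

theory Defs
  imports "HOL-Analysis.Analysis"
begin

definition fock_kernel :: "real \<Rightarrow> complex \<Rightarrow> complex \<Rightarrow> complex" where
  "fock_kernel \<alpha> z w = exp (complex_of_real \<alpha> * cnj z * w)"

definition fock_inf_norm :: "real \<Rightarrow> (complex \<Rightarrow> complex) \<Rightarrow> real" where
  "fock_inf_norm \<alpha> f = (SUP z. cmod (f z) * exp (- \<alpha> * (cmod z)\<^sup>2 / 2))"

definition fock_inf :: "real \<Rightarrow> (complex \<Rightarrow> complex) set" where
  "fock_inf \<alpha> = {f. f holomorphic_on UNIV \<and>
      bdd_above (range (\<lambda>z. cmod (f z) * exp (- \<alpha> * (cmod z)\<^sup>2 / 2)))}"

definition condition_M :: "real \<Rightarrow> complex measure \<Rightarrow> bool" where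
  "condition_M \<alpha> \<mu> \<longleftrightarrow> (\<forall>z. (\<integral>\<^sup>+ w. ennreal ((cmod (fock_kernel \<alpha> z w))\<^sup>2
        * exp (- \<alpha> * (cmod w)\<^sup>2)) \<partial>\<mu>) < \<infinity>)"

definition toeplitz :: "real \<Rightarrow> complex measure \<Rightarrow> (complex \<Rightarrow> complex) \<Rightarrow> complex \<Rightarrow> complex" where
  "toeplitz \<alpha> \<mu> f z = (LINT w|\<mu>. f w * cnj (fock_kernel \<alpha> z w)
        * complex_of_real (exp (- \<alpha> * (cmod w)\<^sup>2)))"

definition mu_tilde1 :: "real \<Rightarrow> complex measure \<Rightarrow> complex \<Rightarrow> ennreal" where
  "mu_tilde1 \<alpha> \<mu> z = ennreal (\<alpha> / pi) *
      (\<integral>\<^sup>+ w. ennreal (exp (- \<alpha> * (cmod (z - w))\<^sup>2 / 2)) \<partial>\<mu>)"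

definition in_C0 :: "(complex \<Rightarrow> ennreal) \<Rightarrow> bool" where
  "in_C0 g \<longleftrightarrow> (\<forall>z. g z < \<infinity>) \<and> continuous_on UNIV (\<lambda>z. enn2real (g z))
      \<and> ((\<lambda>z. enn2real (g z)) \<longlongrightarrow> 0) at_infinity"

definition fock_inf_compact :: "real \<Rightarrow> ((complex \<Rightarrow> complex) \<Rightarrow> (complex \<Rightarrow> complex)) \<Rightarrow> bool" where
  "fock_inf_compact \<alpha> T \<longleftrightarrow> (\<forall>f\<in>fock_inf \<alpha>. T f \<in> fock_inf \<alpha>) \<and>
     (\<forall>fs. (\<forall>n. fs n \<in> fock_inf \<alpha>) \<and> bdd_above (range (\<lambda>n. fock_inf_norm \<alpha> (fs n))) \<longrightarrow>
        (\<exists>(r::nat \<Rightarrow> nat) g. strict_mono r \<and> g \<in> fock_inf \<alpha> \<and>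
           (\<lambda>k. fock_inf_norm \<alpha> (\<lambda>z. T (fs (r k)) z - g z)) \<longlonglongrightarrow> 0))"

end

theory Submission
  imports Defs "HOL-Complex_Analysis.Complex_Analysis" "HOL-Library.Nat_Bijection" "HOL-Real_Asymp.Real_Asymp"
begin

(*
  Let G(z) be the integral of exp(-alpha |z - w|^2 / 2) d mu(w), so that mu_tilde1 = (alpha/pi) G,
  and B(a) the integral of exp(-alpha |a - w|^2) d mu(w), which is finite by condition (M).
  The normalized kernels k_a have norm at most 1 and satisfy |T k_a(a)| exp(-alpha |a|^2 / 2) = B(a),
  while |T f(z)| exp(-alpha |z|^2 / 2) is at most the integral of
  |f(w)| exp(-alpha |w|^2 / 2) exp(-alpha |z - w|^2 / 2) d mu(w).

  If T is compact, B is bounded, and B(a) -> 0 because k_a -> 0 locally uniformly as a -> infinity.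
  Rounding to the lattice Z^2 bounds G(z) by a sum of B(z + p) with summable Gaussian weights, so G is
  finite and tends to 0; it is continuous by dominated convergence.

  Conversely, if G is in C_0, Montel's theorem gives a locally uniformly convergent subsequence of a
  bounded sequence, and in the pointwise estimate for T of the differences the contributions of far
  points z (where G is small), of a compact set of points w (where the differences are small) and of
  the Gaussian tail all become small uniformly in z.
*)

lemma Re_cnj_mult_eq: "Re (cnj a * w) = ((cmod w)\<^sup>2 + (cmod a)\<^sup>2 - (cmod (a - w))\<^sup>2) / 2"
  unfolding cmod_power2 by (simp add: power2_eq_square algebra_simps)

lemma sums_integral_dominated:
  fixes t :: "nat \<Rightarrow> 'a \<Rightarrow> 'b::{banach,second_countable_topology}"
  assumes t: "\<And>n. t n \<in> borel_measurable M" and g: "integrable M g"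
    and summable: "\<And>x. summable (\<lambda>n. norm (t n x))" and le: "\<And>x. (\<Sum>n. norm (t n x)) \<le> g x"
  shows "(\<lambda>n. integral\<^sup>L M (t n)) sums (\<integral>x. (\<Sum>n. t n x) \<partial>M)"
proof (rule sums_integral)
  have partial_le: "(\<Sum>n\<in>I. norm (t n x)) \<le> g x" if "finite I" for I x
    using order_trans[OF sum_le_suminf[OF summable that] le] by simp
  show integrable: "integrable M (t n)" for n
  proof (rule Bochner_Integration.integrable_bound[OF g t])
    show "AE x in M. norm (t n x) \<le> norm (g x)"
      using partial_le[of "{n}"] by (intro AE_I2) (simp add: order_trans[OF _ abs_ge_self])
  qed
  show "AE x in M. summable (\<lambda>n. norm (t n x))" using summable by simp
  show "summable (\<lambda>n. \<integral>x. norm (t n x) \<partial>M)"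
  proof (rule summableI_nonneg_bounded)
    show "(\<Sum>n<N. \<integral>x. norm (t n x) \<partial>M) \<le> integral\<^sup>L M g" for N
    proof -
      have "(\<Sum>n<N. \<integral>x. norm (t n x) \<partial>M) = (\<integral>x. (\<Sum>n<N. norm (t n x)) \<partial>M)"
        using integrable by (intro Bochner_Integration.integral_sum[symmetric]) simp
      also have "\<dots> \<le> integral\<^sup>L M g"
        using integrable partial_le by (intro integral_mono g) auto
      finally show ?thesis .
    qed
  qed simp
qed

lemma tendsto_at_infinity_subseqI:
  fixes g :: "'a::real_normed_vector \<Rightarrow> 'b::metric_space"
  assumes "\<And>zs. filterlim zs at_infinity sequentially \<Longrightarrow> \<exists>r. strict_mono r \<and> (\<lambda>n. g (zs (r n))) \<longlonglongrightarrow> l"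
  shows "(g \<longlongrightarrow> l) at_infinity"
proof (rule ccontr)
  assume "\<not> (g \<longlongrightarrow> l) at_infinity"
  then obtain \<epsilon> where \<epsilon>: "0 < \<epsilon>" and not_eventually: "\<not> eventually (\<lambda>z. dist (g z) l < \<epsilon>) at_infinity"
    unfolding tendsto_iff by blast
  have "\<exists>z. real n \<le> norm z \<and> \<epsilon> \<le> dist (g z) l" for n :: nat
  proof (rule ccontr)
    assume "\<nexists>z. real n \<le> norm z \<and> \<epsilon> \<le> dist (g z) l"
    then have "\<forall>z. real n \<le> norm z \<longrightarrow> dist (g z) l < \<epsilon>" by (metis not_le)
    then show False using not_eventually unfolding eventually_at_infinity by blast
  qed
  then obtain zs where zs: "\<And>n. real n \<le> norm (zs n)" "\<And>n. \<epsilon> \<le> dist (g (zs n)) l" by metis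
  have "filterlim zs at_infinity sequentially"
    unfolding filterlim_at_infinity_conv_norm_at_top
    by (rule filterlim_at_top_mono[OF filterlim_real_sequentially]) (use zs(1) in auto)
  then obtain r where "(\<lambda>n. g (zs (r n))) \<longlonglongrightarrow> l" using assms by blast
  then have "eventually (\<lambda>n. dist (g (zs (r n))) l < \<epsilon>) sequentially" using \<epsilon> by (rule tendstoD)
  then obtain n where "dist (g (zs (r n))) l < \<epsilon>" by (auto simp: eventually_sequentially)
  with zs(2)[of "r n"] show False by simp
qed

lemma continuous_tendsto_zero_bounded_above:
  fixes g :: "'a::{real_normed_vector,heine_borel} \<Rightarrow> real"
  assumes "continuous_on UNIV g" "(g \<longlongrightarrow> 0) at_infinity"
  obtains C where "\<And>z. g z \<le> C"
proof -
  obtain b where b: "\<And>z. b \<le> norm z \<Longrightarrow> dist (g z) 0 < 1"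
    using tendstoD[OF assms(2), of 1] unfolding eventually_at_infinity by auto
  have "compact (g ` cball 0 b)"
    by (rule compact_continuous_image[OF continuous_on_subset[OF assms(1)] compact_cball]) auto
  then obtain B where B: "\<And>y. y \<in> g ` cball 0 b \<Longrightarrow> norm y \<le> B"
    by (meson bounded_iff compact_imp_bounded)
  have "g z \<le> max 1 B" for z
  proof (cases "b \<le> norm z")
    case True
    then show ?thesis using b[of z] by (simp add: dist_real_def)
  next
    case False
    then show ?thesis using B[of "g z"] by simp
  qed
  with that show thesis by blast
qed

lemma le_nn_integral_count_space: "f y \<le> (\<integral>\<^sup>+ x. f x \<partial>count_space UNIV)"
proof -
  have "f y = (\<integral>\<^sup>+ x. f x * indicator {y} x \<partial>count_space UNIV)"
    using nn_integral_indicator_singleton[of y "count_space UNIV" f] by simp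
  also have "\<dots> \<le> (\<integral>\<^sup>+ x. f x \<partial>count_space UNIV)"
    by (intro nn_integral_mono) (auto simp: indicator_def)
  finally show ?thesis .
qed

lemma of_int_round_square_le: "(of_int (round t))\<^sup>2 \<le> 4 * (t :: real)\<^sup>2"
proof (cases "round t = 0")
  case False
  then have "\<bar>real_of_int (round t)\<bar> \<le> 2 * \<bar>t\<bar>"
    using of_int_round_abs_le[of t] by linarith
  then have "\<bar>real_of_int (round t)\<bar>\<^sup>2 \<le> (2 * \<bar>t\<bar>)\<^sup>2" by (rule power_mono) auto
  then show ?thesis by (simp add: power_mult_distrib)
qed simp

lemma round_diff_square_le: "(t - of_int (round t))\<^sup>2 \<le> (1 / 4 :: real)"
proof -
  have "\<bar>t - of_int (round t)\<bar> \<le> 1 / 2" using of_int_round_abs_le[of t] by linarith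
  then have "\<bar>t - of_int (round t)\<bar>\<^sup>2 \<le> (1 / 2)\<^sup>2" by (intro power_mono) auto
  then show ?thesis by (simp add: power2_eq_square)
qed

lemma int_decode_le: "real k \<le> 2 * \<bar>real_of_int (int_decode k)\<bar> + 1"
  by (cases "even k") (auto simp: int_decode_def sum_decode_def elim!: evenE oddE)

lemma nn_integral_exp_neg_square_int_finite:
  assumes "0 < \<beta>"
  shows "(\<integral>\<^sup>+ m. ennreal (exp (- \<beta> * (of_int m)\<^sup>2)) \<partial>count_space (UNIV :: int set)) < \<infinity>"
proof -
  define \<rho> where "\<rho> = exp (- \<beta> / 2)"
  have \<rho>: "0 \<le> \<rho>" "\<rho> < 1" unfolding \<rho>_def using assms by auto
  have le: "exp (- \<beta> * (of_int (int_decode k))\<^sup>2) \<le> exp (\<beta> / 2) * \<rho> ^ k" for k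
  proof -
    define d where "d = real_of_int (int_decode k)"
    have "\<bar>d\<bar> \<le> d\<^sup>2"
    proof (cases "int_decode k = 0")
      case False
      then have "\<bar>d\<bar> * 1 \<le> \<bar>d\<bar> * \<bar>d\<bar>" unfolding d_def by (intro mult_left_mono) auto
      then show ?thesis by (simp add: power2_eq_square abs_mult_self_eq)
    qed (simp add: d_def)
    then have "(real k - 1) / 2 \<le> d\<^sup>2" using int_decode_le[of k] by (simp add: d_def)
    then have "\<beta> * ((real k - 1) / 2) \<le> \<beta> * d\<^sup>2" using assms by (intro mult_left_mono) auto
    then have "- \<beta> * d\<^sup>2 \<le> \<beta> / 2 + real k * (- \<beta> / 2)" by (simp add: field_simps)
    then have "exp (- \<beta> * d\<^sup>2) \<le> exp (\<beta> / 2 + real k * (- \<beta> / 2))" by simp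
    also have "\<dots> = exp (\<beta> / 2) * \<rho> ^ k" by (simp only: \<rho>_def exp_add exp_of_nat_mult)
    finally show ?thesis by (simp add: d_def)
  qed
  have "(\<integral>\<^sup>+ m. ennreal (exp (- \<beta> * (of_int m)\<^sup>2)) \<partial>count_space UNIV)
      = (\<integral>\<^sup>+ k. ennreal (exp (- \<beta> * (of_int (int_decode k))\<^sup>2)) \<partial>count_space UNIV)"
    using nn_integral_bij_count_space[OF bij_int_decode, of "\<lambda>m. ennreal (exp (- \<beta> * (of_int m)\<^sup>2))"] by simp
  also have "\<dots> \<le> (\<integral>\<^sup>+ k. ennreal (exp (\<beta> / 2) * \<rho> ^ k) \<partial>count_space UNIV)"
    by (intro nn_integral_mono ennreal_leI le)
  also have "\<dots> = ennreal (\<Sum>k. exp (\<beta> / 2) * \<rho> ^ k)"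
    using \<rho> by (simp add: nn_integral_count_space_nat suminf_ennreal2 summable_mult summable_geometric)
  finally show ?thesis by (simp add: order_le_less_trans)
qed

section \<open>The weighted sup norm\<close>

definition fock_modulus :: "real \<Rightarrow> (complex \<Rightarrow> complex) \<Rightarrow> complex \<Rightarrow> real" where
  "fock_modulus \<alpha> f z = cmod (f z) * exp (- \<alpha> * (cmod z)\<^sup>2 / 2)"

lemma fock_modulus_nonneg: "0 \<le> fock_modulus \<alpha> f z"
  by (simp add: fock_modulus_def)

lemma fock_modulus_le_iff: "fock_modulus \<alpha> f z \<le> M \<longleftrightarrow> cmod (f z) \<le> M * exp (\<alpha> * (cmod z)\<^sup>2 / 2)"
  by (simp add: fock_modulus_def exp_minus field_simps)

lemma fock_modulus_diff_le:
  "fock_modulus \<alpha> (\<lambda>w. f w - g w) z \<le> fock_modulus \<alpha> f z + fock_modulus \<alpha> g z"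
  unfolding fock_modulus_def distrib_right[symmetric]
  by (intro mult_right_mono norm_triangle_ineq4) auto

lemma fock_inf_iff: "f \<in> fock_inf \<alpha> \<longleftrightarrow> f holomorphic_on UNIV \<and> bdd_above (range (fock_modulus \<alpha> f))"
  by (simp add: fock_inf_def fock_modulus_def)

lemma fock_infI: "f holomorphic_on UNIV \<Longrightarrow> (\<And>z. fock_modulus \<alpha> f z \<le> M) \<Longrightarrow> f \<in> fock_inf \<alpha>"
  unfolding fock_inf_iff by (metis bdd_aboveI2)

lemma fock_inf_holomorphic: "f \<in> fock_inf \<alpha> \<Longrightarrow> f holomorphic_on UNIV"
  by (simp add: fock_inf_iff)

lemma fock_inf_measurable: "f \<in> fock_inf \<alpha> \<Longrightarrow> f \<in> borel_measurable borel"
  by (intro borel_measurable_continuous_onI holomorphic_on_imp_continuous_on fock_inf_holomorphic)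

lemma borel_measurable_fock_modulus [measurable]:
  assumes "f \<in> borel_measurable borel"
  shows "fock_modulus \<alpha> f \<in> borel_measurable borel"
proof -
  have "(\<lambda>z. exp (- \<alpha> * (cmod z)\<^sup>2 / 2)) \<in> borel_measurable borel"
    by (intro borel_measurable_continuous_onI continuous_intros) auto
  with assms show ?thesis unfolding fock_modulus_def by measurable
qed

lemma fock_modulus_le_norm:
  "bdd_above (range (fock_modulus \<alpha> f)) \<Longrightarrow> fock_modulus \<alpha> f z \<le> fock_inf_norm \<alpha> f"
  unfolding fock_inf_norm_def fock_modulus_def[symmetric] by (rule cSUP_upper) auto

lemma fock_inf_norm_le: "(\<And>z. fock_modulus \<alpha> f z \<le> C) \<Longrightarrow> fock_inf_norm \<alpha> f \<le> C"
  unfolding fock_inf_norm_def fock_modulus_def[symmetric] by (rule cSUP_least) auto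

lemma fock_inf_norm_nonneg: "bdd_above (range (fock_modulus \<alpha> f)) \<Longrightarrow> 0 \<le> fock_inf_norm \<alpha> f"
  using fock_modulus_le_norm fock_modulus_nonneg order_trans by metis

lemma fock_inf_diff_bdd:
  assumes "f \<in> fock_inf \<alpha>" "g \<in> fock_inf \<alpha>"
  shows "bdd_above (range (fock_modulus \<alpha> (\<lambda>z. f z - g z)))"
proof (rule bdd_aboveI2)
  fix z
  show "fock_modulus \<alpha> (\<lambda>z. f z - g z) z \<le> fock_inf_norm \<alpha> f + fock_inf_norm \<alpha> g"
    using fock_modulus_diff_le[of \<alpha> f g z] assms
      fock_modulus_le_norm[of \<alpha> f z] fock_modulus_le_norm[of \<alpha> g z] by (simp add: fock_inf_iff)
qed

lemma fock_inf_norm_triangle: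
  assumes "f \<in> fock_inf \<alpha>" "g \<in> fock_inf \<alpha>"
  shows "fock_inf_norm \<alpha> f \<le> fock_inf_norm \<alpha> (\<lambda>z. f z - g z) + fock_inf_norm \<alpha> g"
proof (rule fock_inf_norm_le)
  fix z
  have "fock_modulus \<alpha> f z \<le> fock_modulus \<alpha> (\<lambda>z. f z - g z) z + fock_modulus \<alpha> g z"
    using fock_modulus_diff_le[of \<alpha> "\<lambda>z. f z - g z" "\<lambda>z. - g z" z] by (simp add: fock_modulus_def)
  also have "\<dots> \<le> fock_inf_norm \<alpha> (\<lambda>z. f z - g z) + fock_inf_norm \<alpha> g"
    using assms by (intro add_mono fock_modulus_le_norm fock_inf_diff_bdd) (auto simp: fock_inf_iff)
  finally show "fock_modulus \<alpha> f z \<le> fock_inf_norm \<alpha> (\<lambda>z. f z - g z) + fock_inf_norm \<alpha> g" .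
qed

lemma fock_inf_compact_maps: "fock_inf_compact \<alpha> T \<Longrightarrow> f \<in> fock_inf \<alpha> \<Longrightarrow> T f \<in> fock_inf \<alpha>"
  by (simp add: fock_inf_compact_def)

lemma fock_inf_compactE:
  fixes fs :: "nat \<Rightarrow> complex \<Rightarrow> complex"
  assumes "fock_inf_compact \<alpha> T" "\<And>n. fs n \<in> fock_inf \<alpha>" "\<And>n. fock_inf_norm \<alpha> (fs n) \<le> B"
  obtains r g where "strict_mono r" "g \<in> fock_inf \<alpha>"
    "(\<lambda>k. fock_inf_norm \<alpha> (\<lambda>z. T (fs (r k)) z - g z)) \<longlonglongrightarrow> 0"
proof -
  have "bdd_above (range (\<lambda>n. fock_inf_norm \<alpha> (fs n)))" using assms(3) by (rule bdd_aboveI2)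
  with assms(2) have bounded: "(\<forall>n. fs n \<in> fock_inf \<alpha>) \<and> bdd_above (range (\<lambda>n. fock_inf_norm \<alpha> (fs n)))"
    by blast
  have "\<forall>fs. (\<forall>n. fs n \<in> fock_inf \<alpha>) \<and> bdd_above (range (\<lambda>n. fock_inf_norm \<alpha> (fs n))) \<longrightarrow>
      (\<exists>(r::nat \<Rightarrow> nat) g. strict_mono r \<and> g \<in> fock_inf \<alpha> \<and>
         (\<lambda>k. fock_inf_norm \<alpha> (\<lambda>z. T (fs (r k)) z - g z)) \<longlonglongrightarrow> 0)"
    using assms(1) unfolding fock_inf_compact_def by (rule conjunct2)
  from mp[OF spec[OF this, of fs] bounded] show thesis using that by blast
qed

lemma fock_inf_compact_bounded:
  assumes "fock_inf_compact \<alpha> T"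
  obtains C where "\<And>f. f \<in> fock_inf \<alpha> \<Longrightarrow> fock_inf_norm \<alpha> f \<le> 1 \<Longrightarrow> fock_inf_norm \<alpha> (T f) \<le> C"
proof -
  have "\<exists>C. \<forall>f\<in>fock_inf \<alpha>. fock_inf_norm \<alpha> f \<le> 1 \<longrightarrow> fock_inf_norm \<alpha> (T f) \<le> C"
  proof (rule ccontr)
    assume "\<not> ?thesis"
    then have "\<forall>n::nat. \<exists>f. f \<in> fock_inf \<alpha> \<and> fock_inf_norm \<alpha> f \<le> 1 \<and> real n < fock_inf_norm \<alpha> (T f)"
      by (meson not_le)
    then obtain fs where fs: "\<And>n. fs n \<in> fock_inf \<alpha>" "\<And>n. fock_inf_norm \<alpha> (fs n) \<le> 1"
      and large: "\<And>n. real n < fock_inf_norm \<alpha> (T (fs n))" by metis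
    obtain r g where r: "strict_mono r" and g: "g \<in> fock_inf \<alpha>"
      and lim: "(\<lambda>k. fock_inf_norm \<alpha> (\<lambda>z. T (fs (r k)) z - g z)) \<longlonglongrightarrow> 0"
      using fock_inf_compactE[OF assms fs] .
    obtain N where N: "\<And>k. k \<ge> N \<Longrightarrow> fock_inf_norm \<alpha> (\<lambda>z. T (fs (r k)) z - g z) < 1"
      using LIMSEQ_D[OF lim, of 1] by (auto simp: abs_less_iff)
    define k where "k = max N (nat \<lceil>fock_inf_norm \<alpha> g\<rceil> + 1)"
    have "fock_inf_norm \<alpha> (T (fs (r k))) \<le> fock_inf_norm \<alpha> (\<lambda>z. T (fs (r k)) z - g z) + fock_inf_norm \<alpha> g"
      using fock_inf_compact_maps[OF assms fs(1)] g by (rule fock_inf_norm_triangle)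
    also have "\<dots> < 1 + fock_inf_norm \<alpha> g" using N[of k] by (simp add: k_def)
    also have "\<dots> \<le> real k" unfolding k_def by linarith
    also have "\<dots> \<le> real (r k)" using seq_suble[OF r, of k] by simp
    finally show False using large[of "r k"] by simp
  qed
  then show thesis using that by blast
qed

text \<open>Convergence in the weighted sup norm implies pointwise convergence, so a limit of the
  compact operator along a pointwise null sequence is zero.\<close>
lemma fock_inf_compact_pointwise_null:
  fixes fs :: "nat \<Rightarrow> complex \<Rightarrow> complex"
  assumes T: "fock_inf_compact \<alpha> T" and fs: "\<And>n. fs n \<in> fock_inf \<alpha>" "\<And>n. fock_inf_norm \<alpha> (fs n) \<le> B"
    and null: "\<And>z. (\<lambda>n. T (fs n) z) \<longlonglongrightarrow> 0"
  obtains r where "strict_mono r" "(\<lambda>k. fock_inf_norm \<alpha> (T (fs (r k)))) \<longlonglongrightarrow> 0"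
proof -
  obtain r g where r: "strict_mono r" and g: "g \<in> fock_inf \<alpha>"
    and lim: "(\<lambda>k. fock_inf_norm \<alpha> (\<lambda>z. T (fs (r k)) z - g z)) \<longlonglongrightarrow> 0"
    using fock_inf_compactE[OF T fs] .
  have g0: "g z = 0" for z
  proof -
    have le: "cmod (T (fs (r k)) z - g z) \<le> fock_inf_norm \<alpha> (\<lambda>z. T (fs (r k)) z - g z) * exp (\<alpha> * (cmod z)\<^sup>2 / 2)" for k
      using fock_modulus_le_norm[OF fock_inf_diff_bdd[OF fock_inf_compact_maps[OF T fs(1)] g]]
      unfolding fock_modulus_le_iff by blast
    have "(\<lambda>k. fock_inf_norm \<alpha> (\<lambda>z. T (fs (r k)) z - g z) * exp (\<alpha> * (cmod z)\<^sup>2 / 2)) \<longlonglongrightarrow> 0"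
      using tendsto_mult_left_zero[OF lim] by simp
    then have "(\<lambda>k. T (fs (r k)) z - g z) \<longlonglongrightarrow> 0"
      by (rule Lim_null_comparison[OF always_eventually[OF allI[OF le]]])
    moreover have "(\<lambda>k. T (fs (r k)) z - g z) \<longlonglongrightarrow> 0 - g z"
      using LIMSEQ_subseq_LIMSEQ[OF null r] by (intro tendsto_diff) (auto simp: comp_def)
    ultimately have "0 = 0 - g z" by (rule LIMSEQ_unique)
    then show "g z = 0" by simp
  qed
  have "(\<lambda>z. T (fs (r k)) z - g z) = T (fs (r k))" for k by (simp add: g0)
  with lim have "(\<lambda>k. fock_inf_norm \<alpha> (T (fs (r k)))) \<longlonglongrightarrow> 0" by simp
  with r that show thesis by blast
qed

lemma uniform_limit_fock_modulus_diff:
  assumes "0 \<le> \<alpha>" "uniform_limit K f g F"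
  shows "uniform_limit K (\<lambda>k. fock_modulus \<alpha> (\<lambda>w. f k w - g w)) (\<lambda>_. 0) F"
  unfolding uniform_limit_iff
proof (intro allI impI)
  fix e :: real assume "0 < e"
  with assms(2) have "eventually (\<lambda>k. \<forall>w\<in>K. dist (f k w) (g w) < e) F"
    by (simp add: uniform_limit_iff)
  moreover have "dist (fock_modulus \<alpha> (\<lambda>w. f k w - g w) w) 0 \<le> dist (f k w) (g w)" for k w
    using assms(1) by (simp add: fock_modulus_def dist_norm mult_left_le)
  ultimately show "eventually (\<lambda>k. \<forall>w\<in>K. dist (fock_modulus \<alpha> (\<lambda>w. f k w - g w) w) 0 < e) F"
    by (elim eventually_mono) (meson le_less_trans)
qed

lemma fock_inf_norm_tendsto_zeroI:
  assumes "\<And>\<epsilon>. 0 < \<epsilon> \<Longrightarrow> eventually (\<lambda>k. \<forall>z. fock_modulus \<alpha> (f k) z \<le> \<epsilon>) F"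
  shows "((\<lambda>k. fock_inf_norm \<alpha> (f k)) \<longlongrightarrow> 0) F"
proof (rule tendstoI)
  fix \<epsilon> :: real assume "0 < \<epsilon>"
  then have "eventually (\<lambda>k. \<forall>z. fock_modulus \<alpha> (f k) z \<le> \<epsilon> / 2) F" by (intro assms) simp
  then show "eventually (\<lambda>k. dist (fock_inf_norm \<alpha> (f k)) 0 < \<epsilon>) F"
  proof (rule eventually_mono)
    fix k assume bound: "\<forall>z. fock_modulus \<alpha> (f k) z \<le> \<epsilon> / 2"
    then have "0 \<le> fock_inf_norm \<alpha> (f k)" by (intro fock_inf_norm_nonneg bdd_aboveI2) blast
    moreover have "fock_inf_norm \<alpha> (f k) \<le> \<epsilon> / 2" using bound by (intro fock_inf_norm_le) blast
    ultimately show "dist (fock_inf_norm \<alpha> (f k)) 0 < \<epsilon>" using \<open>0 < \<epsilon>\<close> by (simp add: dist_real_def)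
  qed
qed

lemma fock_inf_montel:
  fixes fs :: "nat \<Rightarrow> complex \<Rightarrow> complex"
  assumes "0 \<le> \<alpha>" "\<And>n. fs n holomorphic_on UNIV" "\<And>n w. fock_modulus \<alpha> (fs n) w \<le> M"
  shows "\<exists>r h. strict_mono r \<and> h holomorphic_on UNIV \<and> (\<forall>w. fock_modulus \<alpha> h w \<le> M) \<and>
    (\<forall>K. compact K \<longrightarrow> uniform_limit K (fs \<circ> r) h sequentially)"
proof -
  define H where "H = {h. h holomorphic_on UNIV \<and> (\<forall>w. fock_modulus \<alpha> h w \<le> M)}"
  have locally_bounded: "\<exists>B. \<forall>h\<in>H. \<forall>z\<in>K. norm (h z) \<le> B" if K: "compact K" for K
  proof -
    obtain R where R: "\<And>z. z \<in> K \<Longrightarrow> cmod z \<le> R"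
      using compact_imp_bounded[OF K] by (auto simp: bounded_iff)
    have M: "0 \<le> M" using assms(3)[of 0 0] fock_modulus_nonneg order_trans by blast
    have "norm (h z) \<le> M * exp (\<alpha> * R\<^sup>2 / 2)" if "h \<in> H" "z \<in> K" for h z
    proof -
      have "(cmod z)\<^sup>2 \<le> R\<^sup>2" using R[OF that(2)] by (simp add: power_mono)
      then have "\<alpha> * (cmod z)\<^sup>2 / 2 \<le> \<alpha> * R\<^sup>2 / 2" using assms(1) by (simp add: mult_left_mono)
      then have "M * exp (\<alpha> * (cmod z)\<^sup>2 / 2) \<le> M * exp (\<alpha> * R\<^sup>2 / 2)" using M by (simp add: mult_left_mono)
      moreover have "cmod (h z) \<le> M * exp (\<alpha> * (cmod z)\<^sup>2 / 2)"
        using that(1) by (simp add: H_def fock_modulus_le_iff)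
      ultimately show ?thesis by simp
    qed
    then show ?thesis by blast
  qed
  have range: "range fs \<subseteq> H" using assms(2,3) by (auto simp: H_def)
  obtain h r where h: "h holomorphic_on UNIV" and r: "strict_mono r"
    and pointwise: "\<And>w. w \<in> UNIV \<Longrightarrow> (\<lambda>n. fs (r n) w) \<longlonglongrightarrow> h w"
    and uniform: "\<And>K. compact K \<Longrightarrow> K \<subseteq> UNIV \<Longrightarrow> uniform_limit K (fs \<circ> r) h sequentially"
    by (rule Montel[OF open_UNIV _ _ range]) (use locally_bounded in \<open>auto simp: H_def\<close>)
  have "fock_modulus \<alpha> h w \<le> M" for w
    unfolding fock_modulus_def
    by (rule tendsto_le[OF trivial_limit_sequentially tendsto_const tendsto_mult[OF tendsto_norm[OF pointwise[OF UNIV_I]] tendsto_const]])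
       (use assms(3) in \<open>simp add: fock_modulus_def\<close>)
  with r h uniform show ?thesis by blast
qed

section \<open>Gaussians, lattices and kernels\<close>

definition gauss :: "real \<Rightarrow> complex \<Rightarrow> complex \<Rightarrow> real" where
  "gauss \<alpha> z w = exp (- \<alpha> * (cmod (z - w))\<^sup>2 / 2)"

lemma gauss_pos: "0 < gauss \<alpha> z w"
  by (simp add: gauss_def)

lemma gauss_le_one: "0 \<le> \<alpha> \<Longrightarrow> gauss \<alpha> z w \<le> 1"
  by (simp add: gauss_def)

lemma gauss_translate: "gauss \<alpha> (z + c) (w + c) = gauss \<alpha> z w"
  by (simp add: gauss_def)

lemma borel_measurable_gauss [measurable]: "gauss \<alpha> z \<in> borel_measurable borel"
  unfolding gauss_def by measurable

definition gauss_corners :: "real \<Rightarrow> real \<Rightarrow> complex \<Rightarrow> real" where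
  "gauss_corners \<alpha> r v = gauss \<alpha> (Complex r r) v + gauss \<alpha> (Complex r (- r)) v
     + gauss \<alpha> (Complex (- r) r) v + gauss \<alpha> (Complex (- r) (- r)) v"

text \<open>For the corner \<open>c = (\<plusminus>r, \<plusminus>r)\<close> in the quadrant of \<open>v\<close> one has
  \<open>r\<^sup>2 - |c - v|\<^sup>2/2 = r (|Re v| + |Im v|) - |v|\<^sup>2/2 \<ge> r |v| - |v|\<^sup>2/2\<close>.\<close>
lemma exp_growth_le_gauss_corners:
  assumes "0 \<le> \<alpha>" "0 \<le> r"
  shows "exp (- \<alpha> * (cmod v)\<^sup>2 / 2 + \<alpha> * r * cmod v) \<le> exp (\<alpha> * r\<^sup>2) * gauss_corners \<alpha> r v"
proof -
  define c where "c = Complex (if 0 \<le> Re v then r else - r) (if 0 \<le> Im v then r else - r)"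
  have c: "(cmod (c - v))\<^sup>2 = 2 * r\<^sup>2 - 2 * r * (\<bar>Re v\<bar> + \<bar>Im v\<bar>) + (cmod v)\<^sup>2"
    unfolding c_def cmod_power2 by (simp add: power2_eq_square algebra_simps)
  have "\<alpha> * r * cmod v \<le> \<alpha> * r * (\<bar>Re v\<bar> + \<bar>Im v\<bar>)"
    using assms cmod_le[of v] by (intro mult_left_mono) auto
  moreover have "\<alpha> * r\<^sup>2 + - \<alpha> * (cmod (c - v))\<^sup>2 / 2 = - \<alpha> * (cmod v)\<^sup>2 / 2 + \<alpha> * r * (\<bar>Re v\<bar> + \<bar>Im v\<bar>)"
    unfolding c by (simp add: field_simps)
  ultimately have "- \<alpha> * (cmod v)\<^sup>2 / 2 + \<alpha> * r * cmod v \<le> \<alpha> * r\<^sup>2 + - \<alpha> * (cmod (c - v))\<^sup>2 / 2"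
    by linarith
  then have "exp (- \<alpha> * (cmod v)\<^sup>2 / 2 + \<alpha> * r * cmod v) \<le> exp (\<alpha> * r\<^sup>2) * gauss \<alpha> c v"
    by (simp add: gauss_def mult_exp_exp)
  also have "gauss \<alpha> c v \<le> gauss_corners \<alpha> r v"
    unfolding gauss_corners_def c_def using gauss_pos[of \<alpha> _ v] by (auto intro: add_increasing add_increasing2 less_imp_le)
  finally show ?thesis by simp
qed

lemma gauss_le_gauss_corners:
  assumes "0 \<le> \<alpha>" "cmod q \<le> r"
  shows "gauss \<alpha> q v \<le> exp (\<alpha> * r\<^sup>2) * gauss_corners \<alpha> r v"
proof -
  have "(cmod (q - v))\<^sup>2 = (cmod v)\<^sup>2 - 2 * Re (cnj q * v) + (cmod q)\<^sup>2"
    using Re_cnj_mult_eq[of q v] by simp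
  moreover have "Re (cnj q * v) \<le> r * cmod v"
    using complex_Re_le_cmod[of "cnj q * v"] assms(2) by (simp add: norm_mult mult_right_mono order_trans)
  ultimately have "(cmod v)\<^sup>2 - 2 * r * cmod v \<le> (cmod (q - v))\<^sup>2"
    using zero_le_power2[of "cmod q"] by linarith
  then have "\<alpha> * ((cmod v)\<^sup>2 - 2 * r * cmod v) \<le> \<alpha> * (cmod (q - v))\<^sup>2"
    using assms(1) by (intro mult_left_mono)
  then have "gauss \<alpha> q v \<le> exp (- \<alpha> * (cmod v)\<^sup>2 / 2 + \<alpha> * r * cmod v)"
    unfolding gauss_def by (simp add: field_simps)
  also have "\<dots> \<le> exp (\<alpha> * r\<^sup>2) * gauss_corners \<alpha> r v"
    using assms(1) order_trans[OF norm_ge_zero assms(2)] by (rule exp_growth_le_gauss_corners)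
  finally show ?thesis .
qed

lemma gauss_tendsto_zero:
  assumes "0 < \<alpha>" "filterlim as at_infinity sequentially"
  shows "(\<lambda>n. gauss \<alpha> (as n) w) \<longlonglongrightarrow> 0"
proof -
  have "filterlim (\<lambda>n. cmod (as n - w)) at_top sequentially"
    using tendsto_add_filterlim_at_infinity'[OF assms(2) tendsto_const[of "- w"]]
    by (intro filterlim_at_infinity_imp_norm_at_top) simp
  moreover have "filterlim (\<lambda>t. - \<alpha> * t\<^sup>2 / 2) at_bot at_top"
    using assms(1) by real_asymp
  then have "((\<lambda>t. exp (- \<alpha> * t\<^sup>2 / 2)) \<longlongrightarrow> 0) at_top"
    by (rule filterlim_compose[OF exp_at_bot])
  ultimately show ?thesis
    unfolding gauss_def by (rule filterlim_compose[rotated])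
qed

definition lattice_point :: "int \<times> int \<Rightarrow> complex" where
  "lattice_point p = Complex (of_int (fst p)) (of_int (snd p))"

definition lattice_weight :: "real \<Rightarrow> int \<times> int \<Rightarrow> real" where
  "lattice_weight \<alpha> p = exp (\<alpha> / 2 - \<alpha> * ((of_int (fst p))\<^sup>2 + (of_int (snd p))\<^sup>2) / 8)"

text \<open>Rounding \<open>x\<close> to the nearest lattice point \<open>p\<close> gives \<open>|x - p|\<^sup>2 \<le> 1/2\<close> and
  \<open>|p|\<^sup>2 \<le> 4 |x|\<^sup>2\<close>; this is where \<^const>\<open>lattice_weight\<close> comes from.\<close>
lemma gauss_le_lattice_weight:
  assumes "0 \<le> \<alpha>"
  shows "\<exists>p. gauss \<alpha> 0 x \<le> lattice_weight \<alpha> p * gauss (2 * \<alpha>) (lattice_point p) x"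
proof
  define p where "p = (round (Re x), round (Im x))"
  define D where "D = (cmod (lattice_point p - x))\<^sup>2"
  have D: "D \<le> 1 / 2"
    using round_diff_square_le[of "Re x"] round_diff_square_le[of "Im x"]
    by (simp add: D_def p_def lattice_point_def cmod_power2 power2_commute)
  have p: "(of_int (fst p))\<^sup>2 + (of_int (snd p))\<^sup>2 \<le> 4 * (cmod x)\<^sup>2"
    using of_int_round_square_le[of "Re x"] of_int_round_square_le[of "Im x"]
    by (simp add: p_def cmod_power2)
  have "- \<alpha> * (cmod (0 - x))\<^sup>2 / 2 \<le> \<alpha> / 2 - \<alpha> * ((of_int (fst p))\<^sup>2 + (of_int (snd p))\<^sup>2) / 8 + - (2 * \<alpha>) * D / 2"
    using mult_left_mono[OF p assms] mult_left_mono[OF D assms] by (simp add: field_simps)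
  then show "gauss \<alpha> 0 x \<le> lattice_weight \<alpha> p * gauss (2 * \<alpha>) (lattice_point p) x"
    by (simp add: gauss_def lattice_weight_def D_def mult_exp_exp)
qed

lemma nn_integral_lattice_weight_finite:
  assumes "0 < \<alpha>"
  shows "(\<integral>\<^sup>+ p. ennreal (lattice_weight \<alpha> p) \<partial>count_space UNIV) < \<infinity>"
proof -
  define A where "A = (\<integral>\<^sup>+ m. ennreal (exp (- (\<alpha> / 8) * (of_int m)\<^sup>2)) \<partial>count_space (UNIV :: int set))"
  have split: "ennreal (lattice_weight \<alpha> (m, n))
      = ennreal (exp (\<alpha> / 2)) * ennreal (exp (- (\<alpha> / 8) * (of_int m)\<^sup>2)) * ennreal (exp (- (\<alpha> / 8) * (of_int n)\<^sup>2))" for m n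
  proof -
    have "\<alpha> / 2 - \<alpha> * ((of_int m)\<^sup>2 + (of_int n)\<^sup>2) / 8 = \<alpha> / 2 + - (\<alpha> / 8) * (of_int m)\<^sup>2 + - (\<alpha> / 8) * (of_int n)\<^sup>2"
      by (simp add: field_simps)
    then show ?thesis by (simp only: lattice_weight_def fst_conv snd_conv exp_add) (simp add: ennreal_mult)
  qed
  have "(\<integral>\<^sup>+ p. ennreal (lattice_weight \<alpha> p) \<partial>count_space UNIV)
      = (\<integral>\<^sup>+ m. \<integral>\<^sup>+ n. ennreal (lattice_weight \<alpha> (m, n)) \<partial>count_space UNIV \<partial>count_space UNIV)"
    by (rule nn_integral_fst_count_space[symmetric])
  also have "\<dots> = ennreal (exp (\<alpha> / 2)) * A * A"
    unfolding split A_def by (simp add: nn_integral_cmult nn_integral_multc)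
  finally show ?thesis
    using nn_integral_exp_neg_square_int_finite[of "\<alpha> / 8"] assms by (simp add: A_def ennreal_mult_less_top)
qed

definition normalized_kernel :: "real \<Rightarrow> complex \<Rightarrow> complex \<Rightarrow> complex" where
  "normalized_kernel \<alpha> a w = exp (of_real \<alpha> * cnj a * w - of_real (\<alpha> * (cmod a)\<^sup>2 / 2))"

lemma fock_modulus_normalized_kernel: "fock_modulus \<alpha> (normalized_kernel \<alpha> a) w = gauss \<alpha> a w"
proof -
  have "cmod (normalized_kernel \<alpha> a w) = exp (\<alpha> * Re (cnj a * w) - \<alpha> * (cmod a)\<^sup>2 / 2)"
    unfolding normalized_kernel_def by (simp add: norm_exp_eq_Re algebra_simps)
  moreover have "\<alpha> * Re (cnj a * w) - \<alpha> * (cmod a)\<^sup>2 / 2 + - \<alpha> * (cmod w)\<^sup>2 / 2 = - \<alpha> * (cmod (a - w))\<^sup>2 / 2"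
    unfolding Re_cnj_mult_eq by (simp add: field_simps)
  ultimately show ?thesis unfolding fock_modulus_def gauss_def by (simp add: mult_exp_exp)
qed

lemma normalized_kernel_holomorphic: "normalized_kernel \<alpha> a holomorphic_on UNIV"
  unfolding normalized_kernel_def by (intro holomorphic_intros)

lemma normalized_kernel_in_fock_inf: "0 \<le> \<alpha> \<Longrightarrow> normalized_kernel \<alpha> a \<in> fock_inf \<alpha>"
  by (intro fock_infI[where M = 1] normalized_kernel_holomorphic) (simp add: fock_modulus_normalized_kernel gauss_le_one)

lemma fock_inf_norm_normalized_kernel_le: "0 \<le> \<alpha> \<Longrightarrow> fock_inf_norm \<alpha> (normalized_kernel \<alpha> a) \<le> 1"
  by (intro fock_inf_norm_le) (simp add: fock_modulus_normalized_kernel gauss_le_one)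

definition toeplitz_integrand :: "real \<Rightarrow> (complex \<Rightarrow> complex) \<Rightarrow> complex \<Rightarrow> complex \<Rightarrow> complex" where
  "toeplitz_integrand \<alpha> f z w = f w * cnj (fock_kernel \<alpha> z w) * of_real (exp (- \<alpha> * (cmod w)\<^sup>2))"

lemma toeplitz_eq_integral: "toeplitz \<alpha> \<mu> f z = integral\<^sup>L \<mu> (toeplitz_integrand \<alpha> f z)"
  by (simp add: toeplitz_def toeplitz_integrand_def[abs_def])

lemma norm_fock_kernel: "cmod (fock_kernel \<alpha> z w) = exp (\<alpha> * Re (cnj z * w))"
  unfolding fock_kernel_def by (simp add: norm_exp_eq_Re algebra_simps)

lemma norm_toeplitz_integrand:
  "norm (toeplitz_integrand \<alpha> f z w) = fock_modulus \<alpha> f w * gauss \<alpha> z w * exp (\<alpha> * (cmod z)\<^sup>2 / 2)"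
proof -
  have "\<alpha> * Re (cnj z * w) + - \<alpha> * (cmod w)\<^sup>2
      = - \<alpha> * (cmod w)\<^sup>2 / 2 + - \<alpha> * (cmod (z - w))\<^sup>2 / 2 + \<alpha> * (cmod z)\<^sup>2 / 2"
    unfolding Re_cnj_mult_eq by (simp add: field_simps)
  then have "exp (\<alpha> * Re (cnj z * w)) * exp (- \<alpha> * (cmod w)\<^sup>2)
      = exp (- \<alpha> * (cmod w)\<^sup>2 / 2) * gauss \<alpha> z w * exp (\<alpha> * (cmod z)\<^sup>2 / 2)"
    by (simp add: gauss_def mult_exp_exp)
  then show ?thesis
    by (simp add: toeplitz_integrand_def fock_modulus_def norm_mult norm_fock_kernel mult.assoc)
qed

lemma borel_measurable_toeplitz_integrand [measurable]:
  assumes "f \<in> borel_measurable borel"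
  shows "toeplitz_integrand \<alpha> f z \<in> borel_measurable borel"
proof -
  have "(\<lambda>w. cnj (fock_kernel \<alpha> z w) * of_real (exp (- \<alpha> * (cmod w)\<^sup>2))) \<in> borel_measurable borel"
    unfolding fock_kernel_def by (intro borel_measurable_continuous_onI continuous_intros)
  with assms show ?thesis
    unfolding toeplitz_integrand_def by (simp add: mult.assoc)
qed

lemma toeplitz_integrand_diff:
  "toeplitz_integrand \<alpha> (\<lambda>w. f w - g w) z w = toeplitz_integrand \<alpha> f z w - toeplitz_integrand \<alpha> g z w"
  by (simp add: toeplitz_integrand_def algebra_simps)

lemma toeplitz_integrand_normalized_kernel:
  "toeplitz_integrand \<alpha> (normalized_kernel \<alpha> a) a w = of_real (gauss (2 * \<alpha>) a w * exp (\<alpha> * (cmod a)\<^sup>2 / 2))"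
proof -
  define A where "A = of_real \<alpha> * cnj a * w - of_real (\<alpha> * (cmod a)\<^sup>2 / 2)"
  have sum: "A + of_real \<alpha> * a * cnj w + of_real (- \<alpha> * (cmod w)\<^sup>2)
      = (of_real (- \<alpha> * (cmod (a - w))\<^sup>2 + \<alpha> * (cmod a)\<^sup>2 / 2) :: complex)"
    unfolding A_def complex_eq_iff cmod_power2 by (simp add: power2_eq_square algebra_simps)
  have "cnj (fock_kernel \<alpha> a w) = exp (of_real \<alpha> * a * cnj w)"
    by (simp add: fock_kernel_def exp_cnj)
  then have "toeplitz_integrand \<alpha> (normalized_kernel \<alpha> a) a w
      = exp A * exp (of_real \<alpha> * a * cnj w) * exp (of_real (- \<alpha> * (cmod w)\<^sup>2))"
    unfolding toeplitz_integrand_def normalized_kernel_def A_def exp_of_real by simp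
  also have "\<dots> = exp (of_real (- \<alpha> * (cmod (a - w))\<^sup>2 + \<alpha> * (cmod a)\<^sup>2 / 2))"
    by (simp only: mult_exp_exp sum)
  also have "\<dots> = of_real (gauss (2 * \<alpha>) a w * exp (\<alpha> * (cmod a)\<^sup>2 / 2))"
    unfolding exp_of_real gauss_def by (simp add: mult_exp_exp)
  finally show ?thesis .
qed

text \<open>Expanding \<open>cnj (fock_kernel \<alpha> z w) = exp (\<alpha> z cnj w)\<close> in powers of \<open>z\<close>.\<close>
definition toeplitz_series_term :: "real \<Rightarrow> (complex \<Rightarrow> complex) \<Rightarrow> complex \<Rightarrow> nat \<Rightarrow> complex \<Rightarrow> complex" where
  "toeplitz_series_term \<alpha> f z n w =
     f w * ((of_real \<alpha> * cnj w) ^ n /\<^sub>R fact n) * of_real (exp (- \<alpha> * (cmod w)\<^sup>2)) * z ^ n"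

lemma toeplitz_series_term_sums: "(\<lambda>n. toeplitz_series_term \<alpha> f z n w) sums toeplitz_integrand \<alpha> f z w"
proof -
  have "(\<lambda>n. f w * ((of_real \<alpha> * z * cnj w) ^ n /\<^sub>R fact n) * of_real (exp (- \<alpha> * (cmod w)\<^sup>2)))
      sums (f w * exp (of_real \<alpha> * z * cnj w) * of_real (exp (- \<alpha> * (cmod w)\<^sup>2)))"
    by (intro sums_mult sums_mult2 exp_converges)
  moreover have "cnj (fock_kernel \<alpha> z w) = exp (of_real \<alpha> * z * cnj w)"
    by (simp add: fock_kernel_def exp_cnj)
  ultimately show ?thesis
    unfolding toeplitz_series_term_def toeplitz_integrand_def
    by (simp add: power_mult_distrib scaleR_conv_of_real algebra_simps)
qed

lemma norm_toeplitz_series_term_sums: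
  assumes "0 \<le> \<alpha>"
  shows "(\<lambda>n. norm (toeplitz_series_term \<alpha> f z n w))
    sums (cmod (f w) * exp (\<alpha> * cmod w * cmod z) * exp (- \<alpha> * (cmod w)\<^sup>2))"
proof -
  have "norm (toeplitz_series_term \<alpha> f z n w)
      = cmod (f w) * ((\<alpha> * cmod w * cmod z) ^ n /\<^sub>R fact n) * exp (- \<alpha> * (cmod w)\<^sup>2)" for n
    unfolding toeplitz_series_term_def using assms
    by (simp add: norm_mult norm_power power_mult_distrib abs_of_nonneg)
  then show ?thesis by (simp only:) (intro sums_mult sums_mult2 exp_converges)
qed

lemma borel_measurable_toeplitz_series_term [measurable]:
  assumes "f \<in> borel_measurable borel"
  shows "toeplitz_series_term \<alpha> f z n \<in> borel_measurable borel"
proof -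
  have "(\<lambda>w. (of_real \<alpha> * cnj w) ^ n /\<^sub>R fact n * of_real (exp (- \<alpha> * (cmod w)\<^sup>2)) * z ^ n) \<in> borel_measurable borel"
    by (intro borel_measurable_continuous_onI continuous_intros)
  with assms have "(\<lambda>w. f w * ((of_real \<alpha> * cnj w) ^ n /\<^sub>R fact n * of_real (exp (- \<alpha> * (cmod w)\<^sup>2)) * z ^ n))
      \<in> borel_measurable borel" by measurable
  moreover have "toeplitz_series_term \<alpha> f z n
      = (\<lambda>w. f w * ((of_real \<alpha> * cnj w) ^ n /\<^sub>R fact n * of_real (exp (- \<alpha> * (cmod w)\<^sup>2)) * z ^ n))"
    by (simp add: fun_eq_iff toeplitz_series_term_def mult.assoc)
  ultimately show ?thesis by simp
qed

section \<open>Measures satisfying condition (M)\<close>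

locale fock_measure =
  fixes \<alpha> :: real and \<mu> :: "complex measure"
  assumes alpha_pos: "0 < \<alpha>" and sets_eq: "sets \<mu> = sets borel" and condition_M: "condition_M \<alpha> \<mu>"
begin

lemma measurable_borel: "f \<in> borel_measurable borel \<Longrightarrow> f \<in> borel_measurable \<mu>"
  by (simp add: measurable_cong_sets[OF sets_eq refl])

lemma integrable_gaussI:
  assumes "(\<integral>\<^sup>+ w. ennreal (gauss \<beta> z w) \<partial>\<mu>) < \<infinity>"
  shows "integrable \<mu> (gauss \<beta> z)"
  using assms gauss_pos[of \<beta> z] by (intro integrableI_bounded measurable_borel) (auto simp: less_imp_le)

lemma integrable_tail:
  fixes g :: "complex \<Rightarrow> real"
  assumes "integrable \<mu> g"
  shows "integrable \<mu> (\<lambda>w. indicator {w. R < cmod w} w * g w)"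
proof -
  have "{w. R < cmod w} \<in> sets \<mu>" using sets_eq by simp
  from integrable_real_mult_indicator[OF this assms] show ?thesis by (simp add: mult.commute)
qed

lemma tendsto_integral_tail:
  fixes g :: "complex \<Rightarrow> real"
  assumes "integrable \<mu> g"
  shows "(\<lambda>n. \<integral>w. indicator {w. real n < cmod w} w * g w \<partial>\<mu>) \<longlonglongrightarrow> 0"
proof -
  have sets: "{w. real n < cmod w} \<in> sets \<mu>" for n
    using sets_eq by simp
  have "(\<lambda>n. \<integral>w. indicator {w. real n < cmod w} w * g w \<partial>\<mu>) \<longlonglongrightarrow> (\<integral>w. 0 \<partial>\<mu>)"
  proof (rule integral_dominated_convergence[where w = "\<lambda>w. norm (g w)"])
    show "(\<lambda>w. indicator {w. real n < cmod w} w * g w) \<in> borel_measurable \<mu>" for n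
      using sets[of n] borel_measurable_integrable[OF assms] by measurable
    show "AE w in \<mu>. (\<lambda>n. indicator {w. real n < cmod w} w * g w) \<longlonglongrightarrow> 0"
    proof (rule AE_I2)
      fix w
      obtain N where "cmod w < real N" using reals_Archimedean2 by blast
      then have "eventually (\<lambda>n. indicator {w. real n < cmod w} w * g w = 0) sequentially"
        unfolding eventually_sequentially by (intro exI[of _ N]) auto
      then show "(\<lambda>n. indicator {w. real n < cmod w} w * g w) \<longlonglongrightarrow> 0" by (rule tendsto_eventually)
    qed
  qed (use assms sets in \<open>auto simp: indicator_def\<close>)
  then show ?thesis by simp
qed

lemma integrable_gauss_double: "integrable \<mu> (gauss (2 * \<alpha>) a)"
proof (rule integrable_gaussI)
  have eq: "(cmod (fock_kernel \<alpha> a w))\<^sup>2 * exp (- \<alpha> * (cmod w)\<^sup>2) = exp (\<alpha> * (cmod a)\<^sup>2) * gauss (2 * \<alpha>) a w" for w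
  proof -
    have "2 * \<alpha> * Re (cnj a * w) + - \<alpha> * (cmod w)\<^sup>2 = \<alpha> * (cmod a)\<^sup>2 + - (2 * \<alpha>) * (cmod (a - w))\<^sup>2 / 2"
      unfolding Re_cnj_mult_eq by (simp add: field_simps)
    then show ?thesis
      by (simp add: norm_fock_kernel gauss_def power2_eq_square mult_exp_exp)
  qed
  have "(\<integral>\<^sup>+ w. ennreal ((cmod (fock_kernel \<alpha> a w))\<^sup>2 * exp (- \<alpha> * (cmod w)\<^sup>2)) \<partial>\<mu>) < \<infinity>"
    using condition_M unfolding condition_M_def by blast
  then have "(\<integral>\<^sup>+ w. ennreal (exp (\<alpha> * (cmod a)\<^sup>2)) * ennreal (gauss (2 * \<alpha>) a w) \<partial>\<mu>) < \<infinity>"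
    unfolding eq ennreal_mult[OF exp_ge_zero less_imp_le[OF gauss_pos]] .
  then show "(\<integral>\<^sup>+ w. ennreal (gauss (2 * \<alpha>) a w) \<partial>\<mu>) < \<infinity>"
    by (auto simp: nn_integral_cmult measurable_borel ennreal_mult_less_top)
qed

text \<open>Up to the factor \<open>\<alpha>/\<pi>\<close>, this is the Berezin transform of \<open>\<mu>\<close>.\<close>
definition berezin :: "complex \<Rightarrow> real" where
  "berezin a = integral\<^sup>L \<mu> (gauss (2 * \<alpha>) a)"

lemma berezin_nonneg: "0 \<le> berezin a"
  unfolding berezin_def by (intro integral_nonneg_AE) (simp add: gauss_pos less_imp_le)

lemma nn_integral_gauss_double: "(\<integral>\<^sup>+ w. ennreal (gauss (2 * \<alpha>) a w) \<partial>\<mu>) = ennreal (berezin a)"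
  unfolding berezin_def by (intro nn_integral_eq_integral integrable_gauss_double) (simp add: gauss_pos less_imp_le)

lemma fock_modulus_toeplitz_normalized_kernel:
  "fock_modulus \<alpha> (toeplitz \<alpha> \<mu> (normalized_kernel \<alpha> a)) a = berezin a"
proof -
  have "toeplitz_integrand \<alpha> (normalized_kernel \<alpha> a) a = (\<lambda>w. of_real (gauss (2 * \<alpha>) a w * exp (\<alpha> * (cmod a)\<^sup>2 / 2)))"
    by (simp add: fun_eq_iff toeplitz_integrand_normalized_kernel)
  then have "toeplitz \<alpha> \<mu> (normalized_kernel \<alpha> a) a = of_real (berezin a * exp (\<alpha> * (cmod a)\<^sup>2 / 2))"
    unfolding toeplitz_eq_integral berezin_def by (simp add: integral_mult_left_zero)
  then show ?thesis
    using berezin_nonneg[of a] by (simp add: fock_modulus_def exp_minus norm_mult)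
qed

lemma berezin_le_norm_toeplitz_normalized_kernel:
  assumes "fock_inf_compact \<alpha> (toeplitz \<alpha> \<mu>)"
  shows "berezin a \<le> fock_inf_norm \<alpha> (toeplitz \<alpha> \<mu> (normalized_kernel \<alpha> a))"
proof -
  have "normalized_kernel \<alpha> a \<in> fock_inf \<alpha>" using alpha_pos by (simp add: normalized_kernel_in_fock_inf)
  then have "toeplitz \<alpha> \<mu> (normalized_kernel \<alpha> a) \<in> fock_inf \<alpha>" by (rule fock_inf_compact_maps[OF assms])
  then have "bdd_above (range (fock_modulus \<alpha> (toeplitz \<alpha> \<mu> (normalized_kernel \<alpha> a))))"
    by (simp add: fock_inf_iff)
  then show ?thesis
    using fock_modulus_le_norm fock_modulus_toeplitz_normalized_kernel by metis
qed

lemma berezin_bounded_if_compact: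
  assumes "fock_inf_compact \<alpha> (toeplitz \<alpha> \<mu>)"
  obtains C where "\<And>a. berezin a \<le> C"
proof -
  obtain C where C: "\<And>f. f \<in> fock_inf \<alpha> \<Longrightarrow> fock_inf_norm \<alpha> f \<le> 1 \<Longrightarrow> fock_inf_norm \<alpha> (toeplitz \<alpha> \<mu> f) \<le> C"
    using fock_inf_compact_bounded[OF assms] by blast
  have "berezin a \<le> C" for a
    using alpha_pos
    by (intro order_trans[OF berezin_le_norm_toeplitz_normalized_kernel[OF assms] C]
        normalized_kernel_in_fock_inf fock_inf_norm_normalized_kernel_le) simp_all
  with that show thesis by blast
qed

lemma nn_integral_gauss_le_lattice_sum:
  "(\<integral>\<^sup>+ w. ennreal (gauss \<alpha> z w) \<partial>\<mu>)
     \<le> (\<integral>\<^sup>+ p. ennreal (lattice_weight \<alpha> p) * ennreal (berezin (z + lattice_point p)) \<partial>count_space UNIV)"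
proof -
  have "(\<integral>\<^sup>+ w. ennreal (gauss \<alpha> z w) \<partial>\<mu>)
      \<le> (\<integral>\<^sup>+ w. \<integral>\<^sup>+ p. ennreal (lattice_weight \<alpha> p * gauss (2 * \<alpha>) (z + lattice_point p) w) \<partial>count_space UNIV \<partial>\<mu>)"
  proof (intro nn_integral_mono)
    fix w
    obtain p where "gauss \<alpha> 0 (w - z) \<le> lattice_weight \<alpha> p * gauss (2 * \<alpha>) (lattice_point p) (w - z)"
      using gauss_le_lattice_weight alpha_pos less_imp_le by blast
    then have "ennreal (gauss \<alpha> z w) \<le> ennreal (lattice_weight \<alpha> p * gauss (2 * \<alpha>) (z + lattice_point p) w)"
      using gauss_translate[of \<alpha> 0 z "w - z"] gauss_translate[of "2 * \<alpha>" "lattice_point p" z "w - z"]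
      by (intro ennreal_leI) (simp add: add.commute)
    also have "\<dots> \<le> (\<integral>\<^sup>+ p. ennreal (lattice_weight \<alpha> p * gauss (2 * \<alpha>) (z + lattice_point p) w) \<partial>count_space UNIV)"
      by (rule le_nn_integral_count_space[where f = "\<lambda>p. ennreal (lattice_weight \<alpha> p * gauss (2 * \<alpha>) (z + lattice_point p) w)"])
    finally show "ennreal (gauss \<alpha> z w) \<le> \<dots>" .
  qed
  also have "\<dots> = (\<integral>\<^sup>+ p. \<integral>\<^sup>+ w. ennreal (lattice_weight \<alpha> p) * ennreal (gauss (2 * \<alpha>) (z + lattice_point p) w) \<partial>\<mu> \<partial>count_space UNIV)"
    by (subst nn_integral_count_space_nn_integral)
       (auto intro!: measurable_borel nn_integral_cong simp: ennreal_mult lattice_weight_def gauss_pos less_imp_le)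
  also have "\<dots> = (\<integral>\<^sup>+ p. ennreal (lattice_weight \<alpha> p) * ennreal (berezin (z + lattice_point p)) \<partial>count_space UNIV)"
    by (simp add: nn_integral_cmult measurable_borel nn_integral_gauss_double)
  finally show ?thesis .
qed

lemma nn_integral_gauss_finite_if_berezin_bounded:
  assumes "\<And>a. berezin a \<le> C"
  shows "(\<integral>\<^sup>+ w. ennreal (gauss \<alpha> z w) \<partial>\<mu>) < \<infinity>"
proof -
  have "(\<integral>\<^sup>+ w. ennreal (gauss \<alpha> z w) \<partial>\<mu>)
      \<le> (\<integral>\<^sup>+ p. ennreal (lattice_weight \<alpha> p) * ennreal C \<partial>count_space UNIV)"
    using nn_integral_gauss_le_lattice_sum
    by (rule order_trans) (intro nn_integral_mono mult_left_mono ennreal_leI assms; simp)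
  also have "\<dots> < \<infinity>"
    using nn_integral_lattice_weight_finite[OF alpha_pos] by (simp add: nn_integral_multc ennreal_mult_less_top)
  finally show ?thesis .
qed

lemma lattice_sum_berezin_tendsto_zero:
  assumes bounded: "\<And>a. berezin a \<le> C" and lim: "(berezin \<longlongrightarrow> 0) at_infinity"
    and zs: "filterlim zs at_infinity sequentially"
  shows "(\<lambda>k. \<integral>\<^sup>+ p. ennreal (lattice_weight \<alpha> p) * ennreal (berezin (zs k + lattice_point p)) \<partial>count_space UNIV)
    \<longlonglongrightarrow> 0"
proof -
  have "(\<lambda>k. \<integral>\<^sup>+ p. ennreal (lattice_weight \<alpha> p) * ennreal (berezin (zs k + lattice_point p)) \<partial>count_space UNIV)
      \<longlonglongrightarrow> (\<integral>\<^sup>+ (p :: int \<times> int). 0 \<partial>count_space UNIV)"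
  proof (rule nn_integral_dominated_convergence[where w = "\<lambda>p. ennreal (lattice_weight \<alpha> p) * ennreal C"
        and u = "\<lambda>k p. ennreal (lattice_weight \<alpha> p) * ennreal (berezin (zs k + lattice_point p))"
        and u' = "\<lambda>p. 0" and M = "count_space UNIV"])
    show "AE p in count_space UNIV. ennreal (lattice_weight \<alpha> p) * ennreal (berezin (zs k + lattice_point p))
        \<le> ennreal (lattice_weight \<alpha> p) * ennreal C" for k
      by (intro AE_I2 mult_left_mono ennreal_leI bounded) simp
    show "(\<integral>\<^sup>+ p. ennreal (lattice_weight \<alpha> p) * ennreal C \<partial>count_space UNIV) < \<infinity>"
      using nn_integral_lattice_weight_finite[OF alpha_pos] by (simp add: nn_integral_multc ennreal_mult_less_top)
    show "AE p in count_space UNIV.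
        (\<lambda>k. ennreal (lattice_weight \<alpha> p) * ennreal (berezin (zs k + lattice_point p))) \<longlonglongrightarrow> 0"
    proof (rule AE_I2)
      fix p
      have "filterlim (\<lambda>k. zs k + lattice_point p) at_infinity sequentially"
        by (rule tendsto_add_filterlim_at_infinity'[OF zs tendsto_const])
      then have "(\<lambda>k. berezin (zs k + lattice_point p)) \<longlonglongrightarrow> 0" by (rule filterlim_compose[OF lim])
      then have "(\<lambda>k. ennreal (berezin (zs k + lattice_point p))) \<longlonglongrightarrow> ennreal 0" by (rule tendsto_ennrealI)
      from ennreal_tendsto_cmult[OF ennreal_less_top this, of "lattice_weight \<alpha> p"]
      show "(\<lambda>k. ennreal (lattice_weight \<alpha> p) * ennreal (berezin (zs k + lattice_point p))) \<longlonglongrightarrow> 0"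
        by simp
    qed
  qed simp_all
  then show ?thesis by simp
qed

end

section \<open>Measures with finite Gaussian transform\<close>

locale fock_measure_finite = fock_measure +
  assumes nn_integral_gauss_finite: "\<And>z. (\<integral>\<^sup>+ w. ennreal (gauss \<alpha> z w) \<partial>\<mu>) < \<infinity>"
begin

lemma integrable_gauss: "integrable \<mu> (gauss \<alpha> z)"
  by (rule integrable_gaussI[OF nn_integral_gauss_finite])

definition gauss_transform :: "complex \<Rightarrow> real" where
  "gauss_transform z = integral\<^sup>L \<mu> (gauss \<alpha> z)"

lemma gauss_transform_nonneg: "0 \<le> gauss_transform z"
  unfolding gauss_transform_def by (intro integral_nonneg_AE) (simp add: gauss_pos less_imp_le)

lemma nn_integral_gauss: "(\<integral>\<^sup>+ w. ennreal (gauss \<alpha> z w) \<partial>\<mu>) = ennreal (gauss_transform z)"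
  unfolding gauss_transform_def
  by (intro nn_integral_eq_integral integrable_gauss) (simp add: gauss_pos less_imp_le)

lemma mu_tilde1_eq: "mu_tilde1 \<alpha> \<mu> z = ennreal (\<alpha> / pi * gauss_transform z)"
proof -
  have "mu_tilde1 \<alpha> \<mu> z = ennreal (\<alpha> / pi) * (\<integral>\<^sup>+ w. ennreal (gauss \<alpha> z w) \<partial>\<mu>)"
    unfolding mu_tilde1_def gauss_def ..
  also note nn_integral_gauss
  finally show ?thesis
    using alpha_pos gauss_transform_nonneg[of z] by (subst ennreal_mult) auto
qed

lemma in_C0_mu_tilde1_iff:
  "in_C0 (mu_tilde1 \<alpha> \<mu>) \<longleftrightarrow> continuous_on UNIV gauss_transform \<and> (gauss_transform \<longlongrightarrow> 0) at_infinity"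
proof -
  have c: "\<alpha> / pi \<noteq> 0" using alpha_pos by simp
  have eq: "(\<lambda>z. enn2real (mu_tilde1 \<alpha> \<mu> z)) = (\<lambda>z. \<alpha> / pi * gauss_transform z)"
    using alpha_pos gauss_transform_nonneg by (simp add: mu_tilde1_eq fun_eq_iff)
  have "((\<lambda>z. \<alpha> / pi * gauss_transform z) \<longlongrightarrow> 0) at_infinity \<longleftrightarrow> (gauss_transform \<longlongrightarrow> 0) at_infinity"
    using tendsto_mult_left_iff[OF c, of gauss_transform 0] by simp
  moreover have "continuous_on UNIV (\<lambda>z. \<alpha> / pi * gauss_transform z) \<longleftrightarrow> continuous_on UNIV gauss_transform"
    unfolding continuous_on_eq_continuous_at[OF open_UNIV] using continuous_cmult_left_iff[OF c] by blast
  moreover have "\<forall>z. mu_tilde1 \<alpha> \<mu> z < \<infinity>" by (simp add: mu_tilde1_eq)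
  ultimately show ?thesis unfolding in_C0_def eq by blast
qed

lemma integrable_gauss_corners: "integrable \<mu> (\<lambda>w. gauss_corners \<alpha> r (w - c))"
proof -
  have "gauss \<alpha> p (w - c) = gauss \<alpha> (p + c) w" for p w
    using gauss_translate[of \<alpha> p c "w - c"] by simp
  then show ?thesis
    unfolding gauss_corners_def by (simp add: integrable_gauss)
qed

lemma integrable_exp_growth:
  assumes "0 \<le> r"
  shows "integrable \<mu> (\<lambda>w. exp (- \<alpha> * (cmod w)\<^sup>2 / 2 + \<alpha> * r * cmod w))"
proof (rule Bochner_Integration.integrable_bound[OF integrable_mult_right[OF integrable_gauss_corners[of r 0]]])
  show "(\<lambda>w. exp (- \<alpha> * (cmod w)\<^sup>2 / 2 + \<alpha> * r * cmod w)) \<in> borel_measurable \<mu>"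
    by (intro measurable_borel) measurable
  show "AE w in \<mu>. norm (exp (- \<alpha> * (cmod w)\<^sup>2 / 2 + \<alpha> * r * cmod w))
      \<le> norm (exp (\<alpha> * r\<^sup>2) * gauss_corners \<alpha> r (w - 0))"
    using exp_growth_le_gauss_corners[OF less_imp_le[OF alpha_pos] assms] order_trans[OF _ abs_ge_self]
    by (intro AE_I2) auto
qed

lemma integrable_mult_gauss:
  assumes "\<phi> \<in> borel_measurable borel" "\<And>w. 0 \<le> \<phi> w" "\<And>w. \<phi> w \<le> M"
  shows "integrable \<mu> (\<lambda>w. \<phi> w * gauss \<alpha> z w)"
proof (rule Bochner_Integration.integrable_bound[OF integrable_mult_right[OF integrable_gauss, of M]])
  show "(\<lambda>w. \<phi> w * gauss \<alpha> z w) \<in> borel_measurable \<mu>"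
    using assms(1) by (intro measurable_borel borel_measurable_times borel_measurable_gauss)
  show "AE w in \<mu>. norm (\<phi> w * gauss \<alpha> z w) \<le> norm (M * gauss \<alpha> z w)"
    using assms(2,3) gauss_pos
    by (intro AE_I2) (simp add: abs_mult mult_right_mono less_imp_le order_trans[OF _ abs_ge_self])
qed

lemma integral_mult_gauss_le:
  assumes "\<phi> \<in> borel_measurable borel" "\<And>w. 0 \<le> \<phi> w" "\<And>w. \<phi> w \<le> M"
  shows "(\<integral>w. \<phi> w * gauss \<alpha> z w \<partial>\<mu>) \<le> M * gauss_transform z"
proof -
  have "(\<integral>w. \<phi> w * gauss \<alpha> z w \<partial>\<mu>) \<le> (\<integral>w. M * gauss \<alpha> z w \<partial>\<mu>)"
    using assms gauss_pos
    by (intro integral_mono integrable_mult_gauss integrable_mult_right integrable_gauss)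
       (auto intro: mult_right_mono less_imp_le)
  then show ?thesis by (simp add: gauss_transform_def)
qed

lemma integrable_toeplitz_integrand:
  assumes "f \<in> borel_measurable borel" "\<And>w. fock_modulus \<alpha> f w \<le> M"
  shows "integrable \<mu> (toeplitz_integrand \<alpha> f z)"
proof (rule Bochner_Integration.integrable_bound)
  show "integrable \<mu> (\<lambda>w. fock_modulus \<alpha> f w * gauss \<alpha> z w * exp (\<alpha> * (cmod z)\<^sup>2 / 2))"
    using assms by (intro integrable_mult_left integrable_mult_gauss borel_measurable_fock_modulus fock_modulus_nonneg)
  show "toeplitz_integrand \<alpha> f z \<in> borel_measurable \<mu>"
    using assms(1) by (intro measurable_borel borel_measurable_toeplitz_integrand)
  show "AE w in \<mu>. norm (toeplitz_integrand \<alpha> f z w)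
      \<le> norm (fock_modulus \<alpha> f w * gauss \<alpha> z w * exp (\<alpha> * (cmod z)\<^sup>2 / 2))"
    by (intro AE_I2) (simp add: norm_toeplitz_integrand)
qed

lemma fock_modulus_toeplitz_le:
  assumes "f \<in> borel_measurable borel" "\<And>w. fock_modulus \<alpha> f w \<le> M"
  shows "fock_modulus \<alpha> (toeplitz \<alpha> \<mu> f) z \<le> (\<integral>w. fock_modulus \<alpha> f w * gauss \<alpha> z w \<partial>\<mu>)"
proof -
  have "cmod (toeplitz \<alpha> \<mu> f z) \<le> (\<integral>w. norm (toeplitz_integrand \<alpha> f z w) \<partial>\<mu>)"
    unfolding toeplitz_eq_integral by (rule integral_norm_bound)
  also have "\<dots> = (\<integral>w. fock_modulus \<alpha> f w * gauss \<alpha> z w \<partial>\<mu>) * exp (\<alpha> * (cmod z)\<^sup>2 / 2)"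
    by (simp add: norm_toeplitz_integrand)
  finally show ?thesis by (simp add: fock_modulus_le_iff)
qed

lemma fock_modulus_toeplitz_le_gauss_transform:
  assumes "f \<in> borel_measurable borel" "\<And>w. fock_modulus \<alpha> f w \<le> M"
  shows "fock_modulus \<alpha> (toeplitz \<alpha> \<mu> f) z \<le> M * gauss_transform z"
  using fock_modulus_toeplitz_le[OF assms]
    integral_mult_gauss_le[OF borel_measurable_fock_modulus[OF assms(1)] fock_modulus_nonneg assms(2)]
  by (rule order_trans)

lemma toeplitz_diff:
  assumes "f \<in> borel_measurable borel" "\<And>w. fock_modulus \<alpha> f w \<le> M"
    and "g \<in> borel_measurable borel" "\<And>w. fock_modulus \<alpha> g w \<le> M'"
  shows "toeplitz \<alpha> \<mu> (\<lambda>w. f w - g w) z = toeplitz \<alpha> \<mu> f z - toeplitz \<alpha> \<mu> g z"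
  unfolding toeplitz_eq_integral toeplitz_integrand_diff
  using integrable_toeplitz_integrand[OF assms(1,2)] integrable_toeplitz_integrand[OF assms(3,4)]
  by (simp add: toeplitz_integrand_diff[abs_def])

lemma fock_modulus_toeplitz_diff_le:
  assumes f: "f \<in> borel_measurable borel" "\<And>w. fock_modulus \<alpha> f w \<le> M"
    and g: "g \<in> borel_measurable borel" "\<And>w. fock_modulus \<alpha> g w \<le> M"
  shows "fock_modulus \<alpha> (\<lambda>z. toeplitz \<alpha> \<mu> f z - toeplitz \<alpha> \<mu> g z) z
    \<le> (\<integral>w. fock_modulus \<alpha> (\<lambda>w. f w - g w) w * gauss \<alpha> z w \<partial>\<mu>)"
proof -
  have eq: "(\<lambda>z. toeplitz \<alpha> \<mu> f z - toeplitz \<alpha> \<mu> g z) = toeplitz \<alpha> \<mu> (\<lambda>w. f w - g w)"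
    using toeplitz_diff[OF f g] by auto
  have measurable: "(\<lambda>w. f w - g w) \<in> borel_measurable borel" using f(1) g(1) by measurable
  have bound: "fock_modulus \<alpha> (\<lambda>w. f w - g w) w \<le> M + M" for w
    using fock_modulus_diff_le[of \<alpha> f g w] f(2)[of w] g(2)[of w] by linarith
  show ?thesis unfolding eq by (rule fock_modulus_toeplitz_le[OF measurable bound])
qed

lemma toeplitz_sums:
  assumes f: "f \<in> borel_measurable borel" "\<And>w. fock_modulus \<alpha> f w \<le> M"
  shows "(\<lambda>n. integral\<^sup>L \<mu> (toeplitz_series_term \<alpha> f z n)) sums toeplitz \<alpha> \<mu> f z"
proof -
  note norm_sums = norm_toeplitz_series_term_sums[OF less_imp_le[OF alpha_pos]]
  have dominated: "(\<Sum>n. norm (toeplitz_series_term \<alpha> f z n w)) \<le> M * exp (- \<alpha> * (cmod w)\<^sup>2 / 2 + \<alpha> * cmod z * cmod w)"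
    for w
  proof -
    have "(\<Sum>n. norm (toeplitz_series_term \<alpha> f z n w)) = cmod (f w) * exp (\<alpha> * cmod w * cmod z) * exp (- \<alpha> * (cmod w)\<^sup>2)"
      using norm_sums by (rule sums_unique[symmetric])
    also have "\<dots> \<le> M * exp (\<alpha> * (cmod w)\<^sup>2 / 2) * exp (\<alpha> * cmod w * cmod z) * exp (- \<alpha> * (cmod w)\<^sup>2)"
      using f(2)[of w] by (intro mult_right_mono) (auto simp: fock_modulus_le_iff)
    also have "\<dots> = M * exp (- \<alpha> * (cmod w)\<^sup>2 / 2 + \<alpha> * cmod z * cmod w)"
      by (simp add: mult_exp_exp algebra_simps)
    finally show ?thesis .
  qed
  have "integrable \<mu> (\<lambda>w. M * exp (- \<alpha> * (cmod w)\<^sup>2 / 2 + \<alpha> * cmod z * cmod w))"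
    by (intro integrable_mult_right integrable_exp_growth) simp
  then have "(\<lambda>n. integral\<^sup>L \<mu> (toeplitz_series_term \<alpha> f z n)) sums (\<integral>w. (\<Sum>n. toeplitz_series_term \<alpha> f z n w) \<partial>\<mu>)"
    by (rule sums_integral_dominated[OF measurable_borel[OF borel_measurable_toeplitz_series_term[OF f(1)]]])
       (use norm_sums dominated in \<open>auto intro: sums_summable\<close>)
  moreover have "(\<lambda>w. \<Sum>n. toeplitz_series_term \<alpha> f z n w) = toeplitz_integrand \<alpha> f z"
    using toeplitz_series_term_sums by (simp add: sums_iff fun_eq_iff)
  ultimately show ?thesis by (simp add: toeplitz_eq_integral)
qed

lemma toeplitz_holomorphic:
  assumes "f \<in> borel_measurable borel" "\<And>w. fock_modulus \<alpha> f w \<le> M"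
  shows "toeplitz \<alpha> \<mu> f holomorphic_on UNIV"
proof -
  define c where "c n = integral\<^sup>L \<mu> (toeplitz_series_term \<alpha> f 1 n)" for n
  have "integral\<^sup>L \<mu> (toeplitz_series_term \<alpha> f z n) = c n * z ^ n" for z n
  proof -
    have "toeplitz_series_term \<alpha> f z n = (\<lambda>w. toeplitz_series_term \<alpha> f 1 n w * z ^ n)"
      by (simp add: fun_eq_iff toeplitz_series_term_def)
    then show ?thesis by (subst (1) \<open>toeplitz_series_term \<alpha> f z n = _\<close>) (simp add: c_def)
  qed
  then have sums: "(\<lambda>n. c n * z ^ n) sums toeplitz \<alpha> \<mu> f z" for z
    using toeplitz_sums[OF assms, of z] by simp
  then have eq: "toeplitz \<alpha> \<mu> f = (\<lambda>z. \<Sum>n. c n * z ^ n)" by (auto simp: sums_iff)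
  have "((\<lambda>z. \<Sum>n. c n * z ^ n) has_field_derivative (\<Sum>n. diffs c n * x ^ n)) (at x)" for x
    by (rule termdiffs_strong_converges_everywhere) (use sums in \<open>auto intro: sums_summable\<close>)
  then show ?thesis unfolding eq
    by (auto simp: holomorphic_on_def field_differentiable_def intro: has_field_derivative_at_within)
qed

lemma toeplitz_in_fock_inf:
  assumes "\<And>z. gauss_transform z \<le> C" "f \<in> fock_inf \<alpha>"
  shows "toeplitz \<alpha> \<mu> f \<in> fock_inf \<alpha>"
proof -
  have f: "f \<in> borel_measurable borel" "\<And>w. fock_modulus \<alpha> f w \<le> fock_inf_norm \<alpha> f"
    using assms(2) by (auto simp: fock_inf_measurable fock_inf_iff intro: fock_modulus_le_norm)
  have "fock_modulus \<alpha> (toeplitz \<alpha> \<mu> f) z \<le> fock_inf_norm \<alpha> f * C" for z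
    using fock_modulus_toeplitz_le_gauss_transform[OF f, of z] assms(1)[of z] fock_inf_norm_nonneg[of \<alpha> f]
      assms(2) by (auto simp: fock_inf_iff intro: order_trans mult_left_mono)
  then show ?thesis by (intro fock_infI toeplitz_holomorphic[OF f])
qed

lemma continuous_gauss_transform: "continuous_on UNIV gauss_transform"
proof (rule continuous_on_sequentiallyI)
  fix u :: "nat \<Rightarrow> complex" and a assume u: "u \<longlonglongrightarrow> a"
  then have "(\<lambda>n. u n - a) \<longlonglongrightarrow> 0" by (simp add: LIM_zero)
  then have "Bseq (\<lambda>n. u n - a)" by (rule convergent_imp_Bseq[OF convergentI])
  then obtain R where R: "\<And>n. cmod (u n - a) \<le> R" unfolding Bseq_def by blast
  have "(\<lambda>n. integral\<^sup>L \<mu> (gauss \<alpha> (u n))) \<longlonglongrightarrow> integral\<^sup>L \<mu> (gauss \<alpha> a)"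
  proof (rule integral_dominated_convergence[where w = "\<lambda>w. exp (\<alpha> * R\<^sup>2) * gauss_corners \<alpha> R (w - a)"])
    show "AE w in \<mu>. (\<lambda>n. gauss \<alpha> (u n) w) \<longlonglongrightarrow> gauss \<alpha> a w"
      unfolding gauss_def by (intro AE_I2 tendsto_intros u) auto
    show "AE w in \<mu>. norm (gauss \<alpha> (u n) w) \<le> exp (\<alpha> * R\<^sup>2) * gauss_corners \<alpha> R (w - a)" for n
    proof (rule AE_I2)
      fix w
      have "gauss \<alpha> (u n) w = gauss \<alpha> (u n - a) (w - a)"
        using gauss_translate[of \<alpha> "u n - a" a "w - a"] by simp
      also have "\<dots> \<le> exp (\<alpha> * R\<^sup>2) * gauss_corners \<alpha> R (w - a)"
        using alpha_pos R[of n] by (intro gauss_le_gauss_corners) auto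
      finally show "norm (gauss \<alpha> (u n) w) \<le> exp (\<alpha> * R\<^sup>2) * gauss_corners \<alpha> R (w - a)"
        using gauss_pos[of \<alpha> "u n" w] by simp
    qed
    show "integrable \<mu> (\<lambda>w. exp (\<alpha> * R\<^sup>2) * gauss_corners \<alpha> R (w - a))"
      by (intro integrable_mult_right integrable_gauss_corners)
  qed (simp_all add: measurable_borel)
  then show "(\<lambda>n. gauss_transform (u n)) \<longlonglongrightarrow> gauss_transform a"
    unfolding gauss_transform_def .
qed

lemma toeplitz_normalized_kernel_tendsto_zero:
  assumes "filterlim as at_infinity sequentially"
  shows "(\<lambda>n. toeplitz \<alpha> \<mu> (normalized_kernel \<alpha> (as n)) z) \<longlonglongrightarrow> 0"
proof -
  define E where "E w = gauss \<alpha> z w * exp (\<alpha> * (cmod z)\<^sup>2 / 2)" for w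
  have norm_eq: "norm (toeplitz_integrand \<alpha> (normalized_kernel \<alpha> a) z w) = gauss \<alpha> a w * E w" for a w
    by (simp add: norm_toeplitz_integrand fock_modulus_normalized_kernel E_def mult.assoc)
  have integrand_measurable: "toeplitz_integrand \<alpha> (normalized_kernel \<alpha> a) z \<in> borel_measurable \<mu>" for a
    by (intro measurable_borel borel_measurable_toeplitz_integrand borel_measurable_continuous_onI
        holomorphic_on_imp_continuous_on normalized_kernel_holomorphic)
  have "(\<lambda>n. integral\<^sup>L \<mu> (toeplitz_integrand \<alpha> (normalized_kernel \<alpha> (as n)) z)) \<longlonglongrightarrow> (\<integral>w. 0 \<partial>\<mu>)"
  proof (rule integral_dominated_convergence[where w = E])
    show "integrable \<mu> E" unfolding E_def by (intro integrable_mult_left integrable_gauss)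
    show "AE w in \<mu>. (\<lambda>n. toeplitz_integrand \<alpha> (normalized_kernel \<alpha> (as n)) z w) \<longlonglongrightarrow> 0"
    proof (rule AE_I2)
      fix w
      have "(\<lambda>n. norm (toeplitz_integrand \<alpha> (normalized_kernel \<alpha> (as n)) z w)) \<longlonglongrightarrow> 0"
        using tendsto_mult_left_zero[OF gauss_tendsto_zero[OF alpha_pos assms], of w "E w"] by (simp add: norm_eq)
      then show "(\<lambda>n. toeplitz_integrand \<alpha> (normalized_kernel \<alpha> (as n)) z w) \<longlonglongrightarrow> 0"
        by (rule tendsto_norm_zero_cancel)
    qed
    show "AE w in \<mu>. norm (toeplitz_integrand \<alpha> (normalized_kernel \<alpha> (as n)) z w) \<le> E w" for n
    proof (rule AE_I2)
      fix w
      have "gauss \<alpha> (as n) w * E w \<le> 1 * E w"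
        using alpha_pos gauss_pos[of \<alpha> z w] unfolding E_def
        by (intro mult_right_mono gauss_le_one) auto
      then show "norm (toeplitz_integrand \<alpha> (normalized_kernel \<alpha> (as n)) z w) \<le> E w"
        by (simp add: norm_eq)
    qed
  qed (simp_all add: integrand_measurable)
  then show ?thesis by (simp add: toeplitz_eq_integral)
qed

text \<open>Test the compact operator on the normalized kernels \<open>k\<^sub>a\<close>, which have norm at most one
  and tend to zero locally uniformly as \<open>a \<rightarrow> \<infinity>\<close>.\<close>
lemma berezin_tendsto_zero_if_compact:
  assumes compact: "fock_inf_compact \<alpha> (toeplitz \<alpha> \<mu>)"
  shows "(berezin \<longlongrightarrow> 0) at_infinity"
proof (rule tendsto_at_infinity_subseqI)
  fix as :: "nat \<Rightarrow> complex" assume as: "filterlim as at_infinity sequentially"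
  obtain r where r: "strict_mono r"
    and lim: "(\<lambda>k. fock_inf_norm \<alpha> (toeplitz \<alpha> \<mu> (normalized_kernel \<alpha> (as (r k))))) \<longlonglongrightarrow> 0"
  proof (rule fock_inf_compact_pointwise_null[OF compact, where fs = "\<lambda>n. normalized_kernel \<alpha> (as n)" and B = 1])
    show "normalized_kernel \<alpha> (as n) \<in> fock_inf \<alpha>" "fock_inf_norm \<alpha> (normalized_kernel \<alpha> (as n)) \<le> 1" for n
      using alpha_pos by (simp_all add: normalized_kernel_in_fock_inf fock_inf_norm_normalized_kernel_le)
    show "(\<lambda>n. toeplitz \<alpha> \<mu> (normalized_kernel \<alpha> (as n)) z) \<longlonglongrightarrow> 0" for z
      by (rule toeplitz_normalized_kernel_tendsto_zero[OF as])
  qed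
  have "norm (berezin (as (r k))) \<le> fock_inf_norm \<alpha> (toeplitz \<alpha> \<mu> (normalized_kernel \<alpha> (as (r k))))" for k
    using berezin_le_norm_toeplitz_normalized_kernel[OF compact] berezin_nonneg by simp
  then have "(\<lambda>k. berezin (as (r k))) \<longlonglongrightarrow> 0"
    by (intro Lim_null_comparison[OF always_eventually lim] allI)
  with r show "\<exists>r. strict_mono r \<and> (\<lambda>k. berezin (as (r k))) \<longlonglongrightarrow> 0" by blast
qed

lemma gauss_transform_tendsto_zero:
  assumes bounded: "\<And>a. berezin a \<le> C" and lim: "(berezin \<longlongrightarrow> 0) at_infinity"
  shows "(gauss_transform \<longlongrightarrow> 0) at_infinity"
proof (rule tendsto_at_infinity_subseqI)
  fix zs :: "nat \<Rightarrow> complex" assume zs: "filterlim zs at_infinity sequentially"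
  have "(\<lambda>k. ennreal (gauss_transform (zs k))) \<longlonglongrightarrow> 0"
    by (rule tendsto_sandwich[OF always_eventually always_eventually tendsto_const
          lattice_sum_berezin_tendsto_zero[OF bounded lim zs]])
       (simp_all flip: nn_integral_gauss add: nn_integral_gauss_le_lattice_sum)
  then have "(\<lambda>k. ennreal (gauss_transform (zs k))) \<longlonglongrightarrow> ennreal 0" by simp
  then have "(\<lambda>k. gauss_transform (zs k)) \<longlonglongrightarrow> 0"
    using gauss_transform_nonneg by (subst (asm) tendsto_ennreal_iff) auto
  then show "\<exists>r. strict_mono r \<and> (\<lambda>k. gauss_transform (zs (r k))) \<longlonglongrightarrow> 0"
    by (intro exI[of _ id]) (simp add: strict_mono_def)
qed

text \<open>One Gaussian integrable function dominates all \<open>gauss \<alpha> z\<close> with \<open>|z| \<le> r\<close>, so their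
  tails are small uniformly in \<open>z\<close>.\<close>
lemma gauss_tail_uniformly_small:
  assumes "0 < \<epsilon>"
  obtains R where "\<And>z. cmod z \<le> r \<Longrightarrow> (\<integral>w. indicator {w. R < cmod w} w * gauss \<alpha> z w \<partial>\<mu>) \<le> \<epsilon>"
proof -
  define r' where "r' = max r 0"
  define E where "E = exp (\<alpha> * r'\<^sup>2)"
  have E: "0 < E" by (simp add: E_def)
  have "eventually (\<lambda>n. (\<integral>w. indicator {w. real n < cmod w} w * gauss_corners \<alpha> r' w \<partial>\<mu>) < \<epsilon> / E) sequentially"
    using order_tendstoD(2)[OF tendsto_integral_tail[OF integrable_gauss_corners[of r' 0]]] assms E by simp
  then obtain n where n: "(\<integral>w. indicator {w. real n < cmod w} w * gauss_corners \<alpha> r' w \<partial>\<mu>) < \<epsilon> / E"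
    by (auto simp: eventually_sequentially)
  have "(\<integral>w. indicator {w. real n < cmod w} w * gauss \<alpha> z w \<partial>\<mu>) \<le> \<epsilon>" if "cmod z \<le> r" for z
  proof -
    have "(\<integral>w. indicator {w. real n < cmod w} w * gauss \<alpha> z w \<partial>\<mu>)
        \<le> (\<integral>w. E * (indicator {w. real n < cmod w} w * gauss_corners \<alpha> r' w) \<partial>\<mu>)"
    proof (rule integral_mono)
      show "integrable \<mu> (\<lambda>w. indicator {w. real n < cmod w} w * gauss \<alpha> z w)"
        by (intro integrable_tail integrable_gauss)
      show "integrable \<mu> (\<lambda>w. E * (indicator {w. real n < cmod w} w * gauss_corners \<alpha> r' w))"
        using integrable_tail[OF integrable_gauss_corners[of r' 0]] by simp
      show "indicator {w. real n < cmod w} w * gauss \<alpha> z w \<le> E * (indicator {w. real n < cmod w} w * gauss_corners \<alpha> r' w)"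
        for w
        using gauss_le_gauss_corners[of \<alpha> z r' w] alpha_pos that by (simp add: E_def r'_def indicator_def)
    qed
    also have "\<dots> = E * (\<integral>w. indicator {w. real n < cmod w} w * gauss_corners \<alpha> r' w \<partial>\<mu>)" by simp
    also have "\<dots> \<le> E * (\<epsilon> / E)" using n E by (intro mult_left_mono) auto
    also have "\<dots> = \<epsilon>" using E by simp
    finally show ?thesis .
  qed
  with that show thesis by blast
qed

lemma integral_mult_gauss_le_split:
  assumes \<phi>: "\<phi> \<in> borel_measurable borel" "\<And>w. 0 \<le> \<phi> w" "\<And>w. \<phi> w \<le> M"
    and near: "0 \<le> \<eta>" "\<And>w. cmod w \<le> R \<Longrightarrow> \<phi> w \<le> \<eta>"
  shows "(\<integral>w. \<phi> w * gauss \<alpha> z w \<partial>\<mu>)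
    \<le> \<eta> * gauss_transform z + M * (\<integral>w. indicator {w. R < cmod w} w * gauss \<alpha> z w \<partial>\<mu>)"
proof -
  have "\<phi> w * gauss \<alpha> z w \<le> \<eta> * gauss \<alpha> z w + M * (indicator {w. R < cmod w} w * gauss \<alpha> z w)" for w
  proof (cases "R < cmod w")
    case True
    then show ?thesis
      using \<phi>(3)[of w] near(1) gauss_pos[of \<alpha> z w] by (simp add: mult_right_mono add_increasing)
  next
    case False
    then show ?thesis
      using near(2)[of w] gauss_pos[of \<alpha> z w] by (simp add: mult_right_mono)
  qed
  then have "(\<integral>w. \<phi> w * gauss \<alpha> z w \<partial>\<mu>)
      \<le> (\<integral>w. \<eta> * gauss \<alpha> z w + M * (indicator {w. R < cmod w} w * gauss \<alpha> z w) \<partial>\<mu>)"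
    using \<phi> by (intro integral_mono integrable_mult_gauss Bochner_Integration.integrable_add
        integrable_mult_right integrable_gauss integrable_tail) auto
  also have "\<dots> = \<eta> * gauss_transform z + M * (\<integral>w. indicator {w. R < cmod w} w * gauss \<alpha> z w \<partial>\<mu>)"
    by (simp add: gauss_transform_def integrable_tail integrable_gauss)
  finally show ?thesis .
qed

lemma weighted_gauss_integral_le_max:
  assumes C: "\<And>z. gauss_transform z \<le> C"
    and \<phi>: "\<phi> \<in> borel_measurable borel" "\<And>w. 0 \<le> \<phi> w" "\<And>w. \<phi> w \<le> M"
    and near: "0 \<le> \<eta>" "\<And>w. cmod w \<le> R \<Longrightarrow> \<phi> w \<le> \<eta>"
    and far: "\<And>z. R0 \<le> cmod z \<Longrightarrow> gauss_transform z \<le> \<delta>"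
    and tail: "\<And>z. cmod z \<le> R0 \<Longrightarrow> (\<integral>w. indicator {w. R < cmod w} w * gauss \<alpha> z w \<partial>\<mu>) \<le> \<tau>"
  shows "(\<integral>w. \<phi> w * gauss \<alpha> z w \<partial>\<mu>) \<le> max (M * \<delta>) (\<eta> * C + M * \<tau>)"
proof -
  have M: "0 \<le> M" using \<phi>(2,3) order_trans by blast
  show ?thesis
  proof (cases "R0 \<le> cmod z")
    case True
    have "(\<integral>w. \<phi> w * gauss \<alpha> z w \<partial>\<mu>) \<le> M * gauss_transform z"
      using \<phi> by (rule integral_mult_gauss_le)
    also have "\<dots> \<le> M * \<delta>" using far[OF True] M by (rule mult_left_mono)
    finally show ?thesis by simp
  next
    case False
    have "(\<integral>w. \<phi> w * gauss \<alpha> z w \<partial>\<mu>)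
        \<le> \<eta> * gauss_transform z + M * (\<integral>w. indicator {w. R < cmod w} w * gauss \<alpha> z w \<partial>\<mu>)"
      using \<phi> near by (rule integral_mult_gauss_le_split)
    also have "\<dots> \<le> \<eta> * C + M * \<tau>"
      using C[of z] tail[of z] False near(1) M by (intro add_mono mult_left_mono) auto
    finally show ?thesis by simp
  qed
qed

text \<open>Far from the origin \<open>gauss_transform\<close> is small; near it, the integrals split into a part
  where \<open>\<phi> k\<close> is uniformly small and a Gaussian tail that is small uniformly in \<open>z\<close>.\<close>
lemma weighted_gauss_integrals_uniformly_small:
  assumes C: "\<And>z. gauss_transform z \<le> C" and lim: "(gauss_transform \<longlongrightarrow> 0) at_infinity"
    and \<phi>: "\<And>k. \<phi> k \<in> borel_measurable borel" "\<And>k w. 0 \<le> \<phi> k w" "\<And>k w. \<phi> k w \<le> M"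
    and uniform: "\<And>R. uniform_limit (cball 0 R) \<phi> (\<lambda>_. 0) sequentially"
    and \<epsilon>: "0 < \<epsilon>"
  shows "eventually (\<lambda>k. \<forall>z. (\<integral>w. \<phi> k w * gauss \<alpha> z w \<partial>\<mu>) \<le> \<epsilon>) sequentially"
proof -
  have M: "0 \<le> M" using \<phi>(2,3) order_trans by blast
  have C0: "0 \<le> C" using C gauss_transform_nonneg order_trans by blast
  have "eventually (\<lambda>z. dist (gauss_transform z) 0 < \<epsilon> / (M + 1)) at_infinity"
    using tendstoD[OF lim, of "\<epsilon> / (M + 1)"] \<epsilon> M by simp
  then obtain R0 where R0: "\<And>z. R0 \<le> norm z \<Longrightarrow> dist (gauss_transform z) 0 < \<epsilon> / (M + 1)"
    unfolding eventually_at_infinity by blast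
  have far: "gauss_transform z \<le> \<epsilon> / (M + 1)" if "R0 \<le> cmod z" for z
    using R0[OF that] abs_ge_self[of "gauss_transform z"] by (simp add: dist_real_def)
  have "0 < \<epsilon> / (2 * (M + 1))" using \<epsilon> M by simp
  then obtain R where tail: "\<And>z. cmod z \<le> R0 \<Longrightarrow>
      (\<integral>w. indicator {w. R < cmod w} w * gauss \<alpha> z w \<partial>\<mu>) \<le> \<epsilon> / (2 * (M + 1))"
    using gauss_tail_uniformly_small by blast
  define \<eta> where "\<eta> = \<epsilon> / (2 * (C + 1))"
  have \<eta>: "0 < \<eta>" using \<epsilon> C0 by (simp add: \<eta>_def)
  have bound: "max (M * (\<epsilon> / (M + 1))) (\<eta> * C + M * (\<epsilon> / (2 * (M + 1)))) \<le> \<epsilon>"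
  proof (rule max.boundedI)
    show "M * (\<epsilon> / (M + 1)) \<le> \<epsilon>" using \<epsilon> M by (simp add: field_simps)
    have "\<eta> * C \<le> \<epsilon> / 2" "M * (\<epsilon> / (2 * (M + 1))) \<le> \<epsilon> / 2"
      using \<epsilon> M C0 by (simp_all add: \<eta>_def field_simps)
    then show "\<eta> * C + M * (\<epsilon> / (2 * (M + 1))) \<le> \<epsilon>" by linarith
  qed
  have "eventually (\<lambda>k. \<forall>w\<in>cball 0 R. dist (\<phi> k w) 0 < \<eta>) sequentially"
    using uniform[of R] \<eta> unfolding uniform_limit_iff by blast
  then show ?thesis
  proof (rule eventually_mono)
    fix k assume near: "\<forall>w\<in>cball 0 R. dist (\<phi> k w) 0 < \<eta>"
    have "\<phi> k w \<le> \<eta>" if "cmod w \<le> R" for w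
    proof -
      have "w \<in> cball 0 R" using that by simp
      then show ?thesis using near[rule_format, of w] by (simp add: dist_real_def)
    qed
    then have "(\<integral>w. \<phi> k w * gauss \<alpha> z w \<partial>\<mu>) \<le> max (M * (\<epsilon> / (M + 1))) (\<eta> * C + M * (\<epsilon> / (2 * (M + 1))))" for z
      by (rule weighted_gauss_integral_le_max[OF C \<phi> less_imp_le[OF \<eta>] _ far tail])
    then show "\<forall>z. (\<integral>w. \<phi> k w * gauss \<alpha> z w \<partial>\<mu>) \<le> \<epsilon>" using order_trans[OF _ bound] by blast
  qed
qed

lemma fock_inf_norm_toeplitz_diff_tendsto_zero:
  assumes C: "\<And>z. gauss_transform z \<le> C" and lim: "(gauss_transform \<longlongrightarrow> 0) at_infinity"
    and f: "\<And>k. f k \<in> borel_measurable borel" "\<And>k w. fock_modulus \<alpha> (f k) w \<le> M"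
    and g: "g \<in> borel_measurable borel" "\<And>w. fock_modulus \<alpha> g w \<le> M"
    and uniform: "\<And>R. uniform_limit (cball 0 R) f g sequentially"
  shows "(\<lambda>k. fock_inf_norm \<alpha> (\<lambda>z. toeplitz \<alpha> \<mu> (f k) z - toeplitz \<alpha> \<mu> g z)) \<longlonglongrightarrow> 0"
proof (rule fock_inf_norm_tendsto_zeroI)
  fix \<epsilon> :: real assume "0 < \<epsilon>"
  define \<phi> where "\<phi> = (\<lambda>k. fock_modulus \<alpha> (\<lambda>w. f k w - g w))"
  have "\<phi> k \<in> borel_measurable borel" for k
    unfolding \<phi>_def using f(1) g(1) by measurable
  moreover have "\<phi> k w \<le> 2 * M" for k w
    using fock_modulus_diff_le[of \<alpha> "f k" g w] f(2)[of k w] g(2)[of w] by (simp add: \<phi>_def)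
  moreover have "uniform_limit (cball 0 R) \<phi> (\<lambda>_. 0) sequentially" for R
    unfolding \<phi>_def using alpha_pos uniform by (intro uniform_limit_fock_modulus_diff) auto
  ultimately have "eventually (\<lambda>k. \<forall>z. (\<integral>w. \<phi> k w * gauss \<alpha> z w \<partial>\<mu>) \<le> \<epsilon>) sequentially"
    using \<open>0 < \<epsilon>\<close> by (intro weighted_gauss_integrals_uniformly_small[OF C lim]) (auto simp: \<phi>_def fock_modulus_nonneg)
  moreover have "fock_modulus \<alpha> (\<lambda>z. toeplitz \<alpha> \<mu> (f k) z - toeplitz \<alpha> \<mu> g z) z
      \<le> (\<integral>w. \<phi> k w * gauss \<alpha> z w \<partial>\<mu>)" for k z
    unfolding \<phi>_def by (rule fock_modulus_toeplitz_diff_le[OF f(1,2) g])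
  ultimately show "eventually (\<lambda>k. \<forall>z. fock_modulus \<alpha> (\<lambda>z. toeplitz \<alpha> \<mu> (f k) z - toeplitz \<alpha> \<mu> g z) z \<le> \<epsilon>)
      sequentially"
    by (elim eventually_mono) (use order_trans in blast)
qed

lemma toeplitz_compact:
  assumes C: "\<And>z. gauss_transform z \<le> C" and lim: "(gauss_transform \<longlongrightarrow> 0) at_infinity"
  shows "fock_inf_compact \<alpha> (toeplitz \<alpha> \<mu>)"
  unfolding fock_inf_compact_def
proof (intro conjI allI impI ballI)
  show "toeplitz \<alpha> \<mu> f \<in> fock_inf \<alpha>" if "f \<in> fock_inf \<alpha>" for f
    using C that by (rule toeplitz_in_fock_inf)
  fix fs :: "nat \<Rightarrow> complex \<Rightarrow> complex"
  assume "(\<forall>n. fs n \<in> fock_inf \<alpha>) \<and> bdd_above (range (\<lambda>n. fock_inf_norm \<alpha> (fs n)))"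
  then have fs: "\<And>n. fs n \<in> fock_inf \<alpha>" and "bdd_above (range (\<lambda>n. fock_inf_norm \<alpha> (fs n)))" by auto
  then obtain M where norm_le: "\<And>n. fock_inf_norm \<alpha> (fs n) \<le> M" by (auto simp: bdd_above_def)
  have M: "fock_modulus \<alpha> (fs n) w \<le> M" for n w
    using fock_modulus_le_norm[of \<alpha> "fs n" w] fs[of n] norm_le[of n] by (simp add: fock_inf_iff)
  have holomorphic: "fs n holomorphic_on UNIV" for n using fs by (rule fock_inf_holomorphic)
  obtain r h where montel: "strict_mono r \<and> h holomorphic_on UNIV \<and> (\<forall>w. fock_modulus \<alpha> h w \<le> M) \<and>
      (\<forall>K. compact K \<longrightarrow> uniform_limit K (fs \<circ> r) h sequentially)"
    using fock_inf_montel[where fs = fs, OF less_imp_le[OF alpha_pos] holomorphic M] by blast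
  then have r: "strict_mono r" and h: "h holomorphic_on UNIV" "\<And>w. fock_modulus \<alpha> h w \<le> M"
    and uniform: "\<And>R. uniform_limit (cball 0 R) (\<lambda>k. fs (r k)) h sequentially" by (simp_all add: comp_def)
  have h_measurable: "h \<in> borel_measurable borel"
    using h(1) by (intro borel_measurable_continuous_onI holomorphic_on_imp_continuous_on)
  show "\<exists>r g. strict_mono r \<and> g \<in> fock_inf \<alpha> \<and>
      (\<lambda>k. fock_inf_norm \<alpha> (\<lambda>z. toeplitz \<alpha> \<mu> (fs (r k)) z - g z)) \<longlonglongrightarrow> 0"
  proof (intro exI conjI)
    show "strict_mono r" by (rule r)
    show "toeplitz \<alpha> \<mu> h \<in> fock_inf \<alpha>" using C fock_infI[OF h] by (rule toeplitz_in_fock_inf)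
    show "(\<lambda>k. fock_inf_norm \<alpha> (\<lambda>z. toeplitz \<alpha> \<mu> (fs (r k)) z - toeplitz \<alpha> \<mu> h z)) \<longlonglongrightarrow> 0"
      using fock_inf_measurable[OF fs] M h_measurable h(2) uniform
      by (rule fock_inf_norm_toeplitz_diff_tendsto_zero[OF C lim])
  qed
qed

end

context fock_measure
begin

lemma fock_measure_finiteI:
  "(\<And>z. (\<integral>\<^sup>+ w. ennreal (gauss \<alpha> z w) \<partial>\<mu>) < \<infinity>) \<Longrightarrow> fock_measure_finite \<alpha> \<mu>"
  by (simp add: fock_measure_finite_def fock_measure_finite_axioms_def fock_measure_axioms)

lemma in_C0_if_compact:
  assumes compact: "fock_inf_compact \<alpha> (toeplitz \<alpha> \<mu>)"
  shows "in_C0 (mu_tilde1 \<alpha> \<mu>)"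
proof -
  obtain C where C: "\<And>a. berezin a \<le> C" using berezin_bounded_if_compact[OF compact] by blast
  interpret fock_measure_finite \<alpha> \<mu>
    by (rule fock_measure_finiteI[OF nn_integral_gauss_finite_if_berezin_bounded[OF C]])
  show ?thesis
    using continuous_gauss_transform gauss_transform_tendsto_zero[OF C berezin_tendsto_zero_if_compact[OF compact]]
    by (simp add: in_C0_mu_tilde1_iff)
qed

lemma compact_if_in_C0:
  assumes C0: "in_C0 (mu_tilde1 \<alpha> \<mu>)"
  shows "fock_inf_compact \<alpha> (toeplitz \<alpha> \<mu>)"
proof -
  have "(\<integral>\<^sup>+ w. ennreal (gauss \<alpha> z w) \<partial>\<mu>) < \<infinity>" for z
  proof -
    have "ennreal (\<alpha> / pi) * (\<integral>\<^sup>+ w. ennreal (gauss \<alpha> z w) \<partial>\<mu>) < \<infinity>"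
      using C0 unfolding in_C0_def mu_tilde1_def gauss_def by blast
    then show ?thesis using alpha_pos by (auto simp: ennreal_mult_less_top)
  qed
  then interpret fock_measure_finite \<alpha> \<mu> by (rule fock_measure_finiteI)
  from C0 have continuous: "continuous_on UNIV gauss_transform" and lim: "(gauss_transform \<longlongrightarrow> 0) at_infinity"
    by (simp_all add: in_C0_mu_tilde1_iff)
  obtain C where "\<And>z. gauss_transform z \<le> C"
    using continuous_tendsto_zero_bounded_above[OF continuous lim] by blast
  then show ?thesis using lim by (rule toeplitz_compact)
qed

end

theorem theorem4p2:
  fixes \<alpha> :: real and \<mu> :: "complex measure"
  assumes "\<alpha> > 0"
    and "sets \<mu> = sets borel"
    and "condition_M \<alpha> \<mu>"
  shows "fock_inf_compact \<alpha> (toeplitz \<alpha> \<mu>) \<longleftrightarrow> in_C0 (mu_tilde1 \<alpha> \<mu>)"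
proof -
  interpret fock_measure \<alpha> \<mu> using assms by unfold_locales
  show ?thesis using in_C0_if_compact compact_if_in_C0 by blast
qed

end
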